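(* Let $H_0,H_1$ be complex Hilbert spaces, $G$ a densely defined closed operator from $H_0$ into $H_1$ and $D$ a densely defined closed operator from $H_1$ into $H_0$ with $-G^*\subset D$, and assume the inclusion $\mathrm{dom}(G)\hookrightarrow H_0$ is compact. Let $m_n,m\in\mathcal L(H_0)$, $a_n,a\in\mathcal L(H_1)$ ($n\in\mathbb N$) and $\mu>0$ with $\mathrm{Re}\,m_n,\mathrm{Re}\,m\ge\mu I$, $\mathrm{Re}\,a_n,\mathrm{Re}\,a\ge\mu I$ for all $n$ and $\sup_n\|a_n\|<\infty$. Let $\Lambda,\Lambda_n\colon\mathrm{BD}(G)\to\mathrm{BD}(D)$ be the Dirichlet-to-Neumann operators associated with $-DaG+m$ and $-Da_nG+m_n$. Suppose $m_n\to m$ in the weak operator topology on $\mathcal L(H_0)$ and $(\iota^*a_n\iota)^{-1}\to(\iota^*a\iota)^{-1}$ in the weak operator topology on $\mathcal L(\mathrm{ran}(G))$. Let $q,q_1,q_2,\ldots\in\mathrm{BD}(D)$ with $q_n\to q$ in $\mathrm{BD}(D)$. Then $\Lambda_n^{-1}q_n\to\Lambda^{-1}q$ weakly in $\mathrm{BD}(G)$.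
   Context: $\mathring D=-G^*$, $\mathring G=-D^*$. Domains carry graph inner products. $\mathrm{BD}(G)$ (resp. $\mathrm{BD}(D)$) is the orthogonal complement of $\mathrm{dom}(\mathring G)$ in $\mathrm{dom}(G)$ (resp. of $\mathrm{dom}(\mathring D)$ in $\mathrm{dom}(D)$) with induced inner products; $\pi_{\mathrm{BD}(D)}$ is the orthogonal projection onto $\mathrm{BD}(D)$. For $a,m$ with real parts bounded below by $\mu I$ and $u_0\in\mathrm{BD}(G)$ there is a unique $u\in\mathrm{dom}(G)$ with $aGu\in\mathrm{dom}(D)$, $mu-DaGu=0$, $u-u_0\in\mathrm{dom}(\mathring G)$; $\Lambda u_0=\pi_{\mathrm{BD}(D)}(aGu)$, and $\Lambda$ is a bounded invertible operator $\mathrm{BD}(G)\to\mathrm{BD}(D)$. Under the compactness assumption $\mathrm{ran}(G)$ is closed in $H_1$; it carries the $H_1$-norm, $\iota\colon\mathrm{ran}(G)\hookrightarrow H_1$ is the inclusion and $\iota^*$ the orthogonal projection onto $\mathrm{ran}(G)$; $\iota^*a\iota$ is invertible on $\mathrm{ran}(G)$. *)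

theory Defs
  imports "HOL-Analysis.Analysis"
begin

text \<open>A complex Hilbert space is encoded as a real Hilbert space (type of class
  real_inner + complete_space) together with an orthogonal complex structure J
  (multiplication by the imaginary unit).\<close>

definition complex_structure :: "('a::real_inner \<Rightarrow> 'a) \<Rightarrow> bool" where
  "complex_structure J \<longleftrightarrow> linear J \<and> (\<forall>x. J (J x) = - x) \<and> (\<forall>x y. inner (J x) (J y) = inner x y)"

text \<open>Complex scalar multiplication and the complex inner product
  (linear in the first, conjugate-linear in the second argument).\<close>

definition scaleC :: "('a::real_inner \<Rightarrow> 'a) \<Rightarrow> complex \<Rightarrow> 'a \<Rightarrow> 'a" where
  "scaleC J c x = Re c *\<^sub>R x + Im c *\<^sub>R J x"

definition cinner :: "('a::real_inner \<Rightarrow> 'a) \<Rightarrow> 'a \<Rightarrow> 'a \<Rightarrow> complex" where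
  "cinner J x y = Complex (inner x y) (inner x (J y))"

definition clinear_op ::
  "('a::real_inner \<Rightarrow> 'a) \<Rightarrow> ('b::real_inner \<Rightarrow> 'b) \<Rightarrow> 'a set \<Rightarrow> ('a \<Rightarrow> 'b) \<Rightarrow> bool" where
  "clinear_op J K dm T \<longleftrightarrow>
     (\<forall>c x. x \<in> dm \<longrightarrow> scaleC J c x \<in> dm \<and> T (scaleC J c x) = scaleC K c (T x)) \<and>
     (\<forall>x y. x \<in> dm \<longrightarrow> y \<in> dm \<longrightarrow> x + y \<in> dm \<and> T (x + y) = T x + T y) \<and>
     0 \<in> dm"

definition densely_defined_closed ::
  "('a::{real_inner,complete_space} \<Rightarrow> 'a) \<Rightarrow> ('b::{real_inner,complete_space} \<Rightarrow> 'b) \<Rightarrow> 'a set \<Rightarrow> ('a \<Rightarrow> 'b) \<Rightarrow> bool" where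
  "densely_defined_closed J K dm T \<longleftrightarrow>
     clinear_op J K dm T \<and> closure dm = UNIV \<and> closed ((\<lambda>x. (x, T x)) ` dm)"

definition bounded_clinear_op :: "('a::real_inner \<Rightarrow> 'a) \<Rightarrow> ('a \<Rightarrow> 'a) \<Rightarrow> bool" where
  "bounded_clinear_op J T \<longleftrightarrow> bounded_linear T \<and> (\<forall>x. T (J x) = J (T x))"

definition re_ge :: "('a::real_inner \<Rightarrow> 'a) \<Rightarrow> ('a \<Rightarrow> 'a) \<Rightarrow> real \<Rightarrow> bool" where
  "re_ge J T \<mu> \<longleftrightarrow> (\<forall>x. Re (cinner J (T x) x) \<ge> \<mu> * (norm x)\<^sup>2)"

definition adj_dom :: "('a \<Rightarrow> 'a \<Rightarrow> complex) \<Rightarrow> ('b \<Rightarrow> 'b \<Rightarrow> complex) \<Rightarrow> 'a set \<Rightarrow> ('a \<Rightarrow> 'b) \<Rightarrow> 'b set" where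
  "adj_dom ipA ipB dm T = {y. \<exists>z. \<forall>x\<in>dm. ipB (T x) y = ipA x z}"

definition adj :: "('a \<Rightarrow> 'a \<Rightarrow> complex) \<Rightarrow> ('b \<Rightarrow> 'b \<Rightarrow> complex) \<Rightarrow> 'a set \<Rightarrow> ('a \<Rightarrow> 'b) \<Rightarrow> 'b \<Rightarrow> 'a" where
  "adj ipA ipB dm T y = (THE z. \<forall>x\<in>dm. ipB (T x) y = ipA x z)"

definition graph_inner ::
  "('a::real_inner \<Rightarrow> 'a) \<Rightarrow> ('b::real_inner \<Rightarrow> 'b) \<Rightarrow> ('a \<Rightarrow> 'b) \<Rightarrow> 'a \<Rightarrow> 'a \<Rightarrow> complex" where
  "graph_inner J K T x y = cinner J x y + cinner K (T x) (T y)"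

definition orth_compl_in :: "('v \<Rightarrow> 'v \<Rightarrow> complex) \<Rightarrow> 'v set \<Rightarrow> 'v set \<Rightarrow> 'v set" where
  "orth_compl_in ip V S = {x \<in> V. \<forall>s\<in>S. ip x s = 0}"

definition orth_proj :: "('v::ab_group_add \<Rightarrow> 'v \<Rightarrow> complex) \<Rightarrow> 'v set \<Rightarrow> 'v \<Rightarrow> 'v" where
  "orth_proj ip S x = (THE p. p \<in> S \<and> (\<forall>s\<in>S. ip (x - p) s = 0))"

text \<open>dm(Gcirc) where Gcirc = -D^*.\<close>
definition dom_Gcirc where
  "dom_Gcirc J0 J1 dD D = adj_dom (cinner J1) (cinner J0) dD D"

text \<open>dm(Dcirc) where Dcirc = -G^*.\<close>
definition dom_Dcirc where
  "dom_Dcirc J0 J1 dG G = adj_dom (cinner J0) (cinner J1) dG G"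

definition BD_G where
  "BD_G J0 J1 dG G dD D = orth_compl_in (graph_inner J0 J1 G) dG (dom_Gcirc J0 J1 dD D)"

definition BD_D where
  "BD_D J0 J1 dG G dD D = orth_compl_in (graph_inner J1 J0 D) dD (dom_Dcirc J0 J1 dG G)"

definition DtN where
  "DtN J0 J1 dG G dD D a m u0 =
     (let u = (THE u. u \<in> dG \<and> a (G u) \<in> dD \<and> m u - D (a (G u)) = 0
                     \<and> u - u0 \<in> dom_Gcirc J0 J1 dD D)
      in orth_proj (graph_inner J1 J0 D) (BD_D J0 J1 dG G dD D) (a (G u)))"

definition DtN_inv where
  "DtN_inv J0 J1 dG G dD D a m q = inv_into (BD_G J0 J1 dG G dD D) (DtN J0 J1 dG G dD D a m) q"

definition compress where
  "compress J1 R a x = orth_proj (cinner J1) R (a x)"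

definition compress_inv where
  "compress_inv J1 R a y = inv_into R (compress J1 R a) y"

end

theory Submission
  imports Defs
begin
(*
  Lambda^-1 q is the BD(G)-component of the weak solution u of the Neumann problem
  (m u, v) + (a G u, G v) = (D q, v) + (q, G v) for all v in dom G, so the claim reduces to the weak
  convergence of the Neumann solutions u_n in dom G. Write y0 for the compression of a G u to
  ran G and x_n = (iota^* a_n iota)^-1 y0: by hypothesis x_n tends weakly to G u, and by the compact
  embedding (via the Poincare inequality on the orthogonal complement of ker G) there are u'_n with
  G u'_n = x_n and u'_n -> u in H0. The a_n-terms of the equation for d_n = u_n - u'_n then cancel
  exactly, and coercivity bounds the graph norm of d_n by the data difference, by the strongly
  vanishing u'_n - u, and by the term (m_n u - m u, d_n), which tends to 0 since m_n u tends weakly to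
  m u (uniformly bounded by the uniform boundedness principle) while d_n is relatively compact in H0.
*)

section \<open>Orthogonal projection in real Hilbert spaces\<close>

lemma parallelogram_law:
  fixes a b :: "'h::real_inner"
  shows "norm (a - b)^2 + norm (a + b)^2 = 2 * norm a^2 + 2 * norm b^2"
  by (simp add: power2_norm_eq_inner inner_diff inner_add inner_commute algebra_simps)

lemma norm_diff_le_midpoint_excess:
  fixes x p q :: "'h::real_inner"
  assumes "d \<ge> 0" and "d \<le> norm (x - (1/2) *\<^sub>R (p + q))"
  shows "norm (p - q)^2 \<le> 2 * (norm (x - p)^2 - d^2) + 2 * (norm (x - q)^2 - d^2)"
proof -
  have "(x - p) + (x - q) = 2 *\<^sub>R (x - (1/2) *\<^sub>R (p + q))"
    by (simp add: algebra_simps scaleR_2)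
  hence "norm ((x - p) + (x - q))^2 = 4 * norm (x - (1/2) *\<^sub>R (p + q))^2"
    by (simp add: power_mult_distrib)
  moreover have "d^2 \<le> norm (x - (1/2) *\<^sub>R (p + q))^2"
    using assms by (simp add: power_mono)
  moreover have "(x - q) - (x - p) = p - q" by simp
  ultimately show ?thesis
    using parallelogram_law[of "x - q" "x - p"] by (simp add: add.commute)
qed

lemma minimizing_sequence_Cauchy:
  fixes V :: "'h::real_inner set"
  assumes sub: "subspace V" and pV: "\<And>n. p n \<in> V" and d0: "d \<ge> 0"
    and dle: "\<And>v. v \<in> V \<Longrightarrow> d \<le> norm (x - v)" and lim: "(\<lambda>n. norm (x - p n)) \<longlonglongrightarrow> d"
  shows "Cauchy p"
proof (rule metric_CauchyI)
  fix e :: real assume e: "e > 0"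
  have excess: "(\<lambda>n. norm (x - p n)^2 - d^2) \<longlonglongrightarrow> 0"
    using tendsto_diff[OF tendsto_power[OF lim, of 2] tendsto_const[of "d^2"]] by simp
  obtain N where N': "\<forall>n\<ge>N. norm (norm (x - p n)^2 - d^2 - 0) < e^2 / 4"
    using LIMSEQ_D[OF excess, of "e^2/4"] e by auto
  have N: "norm (x - p n)^2 - d^2 < e^2 / 4" if "n \<ge> N" for n
  proof -
    have "\<bar>norm (x - p n)^2 - d^2\<bar> < e^2 / 4" using that N' by simp
    thus ?thesis by linarith
  qed
  show "\<exists>M. \<forall>m\<ge>M. \<forall>n\<ge>M. dist (p m) (p n) < e"
  proof (intro exI allI impI)
    fix m n assume "N \<le> m" "N \<le> n"
    have "(1/2) *\<^sub>R (p m + p n) \<in> V" using pV sub by (simp add: subspace_add subspace_scale)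
    hence "norm (p m - p n)^2 \<le> 2 * (norm (x - p m)^2 - d^2) + 2 * (norm (x - p n)^2 - d^2)"
      by (intro norm_diff_le_midpoint_excess d0 dle)
    also have "\<dots> < e^2" using N[OF \<open>N \<le> m\<close>] N[OF \<open>N \<le> n\<close>] by simp
    finally show "dist (p m) (p n) < e" using e by (simp add: dist_norm power_less_imp_less_base)
  qed
qed

lemma closest_point_subspace_exists:
  fixes V :: "'h::{real_inner,complete_space} set"
  assumes sub: "subspace V" and cl: "closed V"
  obtains p where "p \<in> V" "\<And>v. v \<in> V \<Longrightarrow> norm (x - p) \<le> norm (x - v)"
proof -
  define d where "d = infdist x V"
  have V0: "V \<noteq> {}" using sub subspace_0 by blast
  have d0: "d \<ge> 0" unfolding d_def by (rule infdist_nonneg)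
  have dle: "d \<le> norm (x - v)" if "v \<in> V" for v
    using infdist_le[OF that, of x] by (simp add: d_def dist_norm)
  have "\<exists>p\<in>V. norm (x - p) < d + 1/(real n + 1)" for n
  proof -
    have "infdist x V < d + 1/(real n + 1)" by (simp add: d_def)
    then show ?thesis
      using V0 by (auto simp: infdist_def dist_norm intro: cInf_lessD[of "(\<lambda>a. dist x a) ` V", simplified])
  qed
  then obtain p where pV: "\<And>n. p n \<in> V" and pd: "\<And>n. norm (x - p n) < d + 1/(real n + 1)"
    by metis
  have lim: "(\<lambda>n. norm (x - p n)) \<longlonglongrightarrow> d"
  proof (rule tendsto_sandwich[of "\<lambda>_. d" _ _ "\<lambda>n. d + 1/(real n + 1)"])
    show "(\<lambda>n. d + 1/(real n + 1)) \<longlonglongrightarrow> d"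
      using tendsto_add[OF tendsto_const LIMSEQ_inverse_real_of_nat, of d]
      by (simp add: inverse_eq_divide add.commute)
    show "\<forall>\<^sub>F n in sequentially. d \<le> norm (x - p n)" using dle pV by simp
    show "\<forall>\<^sub>F n in sequentially. norm (x - p n) \<le> d + 1/(real n + 1)"
      using pd by (simp add: less_imp_le)
  qed simp
  have "Cauchy p" by (rule minimizing_sequence_Cauchy[OF sub pV d0 dle lim])
  then obtain q where q: "p \<longlonglongrightarrow> q" using Cauchy_convergent_iff convergent_def by blast
  have "norm (x - q) = d"
    using LIMSEQ_unique[OF tendsto_norm[OF tendsto_diff[OF tendsto_const q]] lim] .
  with dle closed_sequentially[OF cl _ q] pV that show ?thesis by auto
qed

lemma closest_point_subspace_orthogonal:
  fixes V :: "'h::real_inner set"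
  assumes sub: "subspace V" and pV: "p \<in> V"
    and pmin: "\<And>v. v \<in> V \<Longrightarrow> norm (x - p) \<le> norm (x - v)" and vV: "v \<in> V"
  shows "inner (x - p) v = 0"
proof -
  define s where "s = inner (x - p) v"
  define c where "c = (norm v)^2 + 1"
  have c: "c > 0" by (simp add: c_def add_nonneg_pos)
  define t where "t = s / c"
  have "p + t *\<^sub>R v \<in> V" using pV vV sub by (simp add: subspace_add subspace_scale)
  hence "norm (x - p)^2 \<le> norm ((x - p) - t *\<^sub>R v)^2"
    using pmin by (simp add: power_mono diff_diff_eq)
  also have "\<dots> = norm (x - p)^2 - 2 * t * s + t^2 * (norm v)^2"
    unfolding s_def power2_norm_eq_inner
    by (simp add: inner_diff_left inner_diff_right inner_commute power2_eq_square algebra_simps)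
  finally have "2 * t * s \<le> t^2 * (norm v)^2" by simp
  moreover have s: "s = t * c" using c by (simp add: t_def)
  ultimately have "2 * (t^2 * c) \<le> t^2 * (norm v)^2" by (simp add: power2_eq_square algebra_simps)
  also have "\<dots> \<le> t^2 * c" by (simp add: c_def mult_left_mono)
  finally have "t^2 * c \<le> 0" by (simp add: mult.commute)
  hence "t = 0" using c by (simp add: mult_le_0_iff)
  hence "s = 0" using s by simp
  thus ?thesis by (simp add: s_def)
qed

lemma orthogonal_projection_exists:
  fixes V :: "'h::{real_inner,complete_space} set"
  assumes "subspace V" and "closed V"
  shows "\<exists>p\<in>V. \<forall>v\<in>V. inner (x - p) v = 0"
  by (metis assms closest_point_subspace_exists closest_point_subspace_orthogonal)

definition proj :: "'h::real_inner set \<Rightarrow> 'h \<Rightarrow> 'h" where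
  "proj V x = (SOME p. p \<in> V \<and> (\<forall>v\<in>V. inner (x - p) v = 0))"

locale closed_subspace =
  fixes V :: "'h::{real_inner,complete_space} set"
  assumes subspace: "subspace V" and closed: "closed V"
begin

lemma proj_spec: "proj V x \<in> V \<and> (\<forall>v\<in>V. inner (x - proj V x) v = 0)"
  unfolding proj_def
  by (rule someI_ex) (use orthogonal_projection_exists[OF subspace closed, of x] in blast)

lemma proj_in: "proj V x \<in> V"
  and proj_orth: "v \<in> V \<Longrightarrow> inner (x - proj V x) v = 0"
  using proj_spec by auto

lemma proj_unique: assumes "p \<in> V" "\<forall>v\<in>V. inner (x - p) v = 0" shows "proj V x = p"
proof -
  have d: "proj V x - p \<in> V" using assms proj_in subspace by (simp add: subspace_diff)
  have "inner (proj V x - p) (proj V x - p) = inner (x - p) (proj V x - p) - inner (x - proj V x) (proj V x - p)"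
    by (simp add: inner_diff_left)
  also have "\<dots> = 0" using assms(2) d proj_orth[OF d] by simp
  finally show ?thesis by simp
qed

lemma proj_add: "proj V (x + y) = proj V x + proj V y"
proof (rule proj_unique)
  show "proj V x + proj V y \<in> V" using proj_in subspace by (simp add: subspace_add)
  have e: "x + y - (proj V x + proj V y) = (x - proj V x) + (y - proj V y)" by simp
  show "\<forall>v\<in>V. inner (x + y - (proj V x + proj V y)) v = 0"
    unfolding e inner_add_left using proj_orth by simp
qed

lemma proj_scaleR: "proj V (r *\<^sub>R x) = r *\<^sub>R proj V x"
proof (rule proj_unique)
  show "r *\<^sub>R proj V x \<in> V" using proj_in subspace by (simp add: subspace_scale)
  show "\<forall>v\<in>V. inner (r *\<^sub>R x - r *\<^sub>R proj V x) v = 0"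
    using proj_orth[of _ x] by (simp add: scaleR_diff_right[symmetric])
qed

lemma linear_proj: "linear (proj V)"
  by (rule linearI) (simp_all add: proj_add proj_scaleR)

lemma norm_proj_le: "norm (proj V x) \<le> norm x"
proof -
  have "inner x x = inner (proj V x) (proj V x) + inner (x - proj V x) (x - proj V x)"
    using proj_orth[OF proj_in, of x] by (simp add: inner_diff_left inner_diff_right inner_commute)
  hence "norm (proj V x)^2 \<le> norm x^2" by (simp add: power2_norm_eq_inner)
  thus ?thesis using power2_le_imp_le norm_ge_zero by blast
qed

lemma bounded_linear_proj: "bounded_linear (proj V)"
  by (rule bounded_linear_intro[where K=1]) (simp_all add: proj_add proj_scaleR norm_proj_le)

lemma inner_proj_left: "v \<in> V \<Longrightarrow> inner (proj V x) v = inner x v"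
  using proj_orth[of v x] by (simp add: inner_diff_left)

end

section \<open>The Lax--Milgram lemma\<close>

lemma closed_image_bounded_below:
  fixes V :: "'h::{real_normed_vector,complete_space} set" and A :: "'h \<Rightarrow> 'k::real_normed_vector"
  assumes sub: "subspace V" and cl: "closed V" and A: "bounded_linear A" and c: "c > 0"
    and below: "\<And>w. w \<in> V \<Longrightarrow> c * norm w \<le> norm (A w)"
  shows "closed (A ` V)"
proof (unfold closed_sequential_limits, intro allI impI, elim conjE)
  fix f l assume fS: "\<forall>n. f n \<in> A ` V" and fl: "f \<longlonglongrightarrow> l"
  then have "\<forall>n. \<exists>u. u \<in> V \<and> f n = A u" by blast
  then obtain u where uV: "\<And>n. u n \<in> V" and fu: "\<And>n. f n = A (u n)" by metis
  have "Cauchy f" using fl by (rule LIMSEQ_imp_Cauchy)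
  have "Cauchy u"
  proof (rule metric_CauchyI)
    fix e :: real assume e: "e > 0"
    obtain N where N: "\<forall>m\<ge>N. \<forall>n\<ge>N. dist (f m) (f n) < c * e"
      using metric_CauchyD[OF \<open>Cauchy f\<close>, of "c * e"] c e by auto
    show "\<exists>N. \<forall>m\<ge>N. \<forall>n\<ge>N. dist (u m) (u n) < e"
    proof (intro exI allI impI)
      fix m n assume mn: "N \<le> m" "N \<le> n"
      have "c * norm (u m - u n) \<le> norm (A (u m - u n))"
        using uV sub by (intro below) (simp add: subspace_diff)
      also have "\<dots> = dist (f m) (f n)"
        using fu A by (simp add: dist_norm linear_diff[OF bounded_linear.linear])
      also have "\<dots> < c * e" using N mn by auto
      finally show "dist (u m) (u n) < e" using c by (simp add: dist_norm)
    qed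
  qed
  then obtain u0 where u0: "u \<longlonglongrightarrow> u0" using Cauchy_convergent_iff convergent_def by blast
  have "f = (\<lambda>n. A (u n))" using fu by auto
  hence "f \<longlonglongrightarrow> A u0" using bounded_linear.tendsto[OF A u0] by simp
  hence "l = A u0" using fl LIMSEQ_unique by blast
  then show "l \<in> A ` V" using closed_sequentially[OF cl _ u0] uV by auto
qed

lemma lax_milgram:
  fixes V :: "'h::{real_inner,complete_space} set" and M :: "'h \<Rightarrow> 'h"
  assumes sub: "subspace V" and cl: "closed V" and M: "bounded_linear M" and c: "c > 0"
    and coerc: "\<forall>v\<in>V. inner (M v) v \<ge> c * (norm v)^2"
  shows "\<exists>u\<in>V. \<forall>v\<in>V. inner (M u) v = inner h v"
proof -
  interpret V: closed_subspace V by unfold_locales (fact sub cl)+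
  define A where "A = proj V \<circ> M"
  have A: "bounded_linear A"
    unfolding A_def by (rule bounded_linear_compose[OF V.bounded_linear_proj M, folded comp_def])
  have inner_A: "v \<in> V \<Longrightarrow> inner (A u) v = inner (M u) v" for u v
    unfolding A_def by (simp add: V.inner_proj_left)
  have below: "c * norm w \<le> norm (A w)" if "w \<in> V" for w
  proof -
    have "c * (norm w)^2 \<le> inner (A w) w" using coerc that inner_A[OF that] by simp
    also have "\<dots> \<le> norm (A w) * norm w" by (rule norm_cauchy_schwarz)
    finally have "c * norm w * norm w \<le> norm (A w) * norm w" by (simp add: power2_eq_square mult.assoc)
    thus ?thesis by (cases "norm w = 0") (auto simp: mult_le_cancel_right)
  qed
  interpret S: closed_subspace "A ` V"
  proof
    show "subspace (A ` V)" using linear_subspace_image[OF bounded_linear.linear[OF A] sub] .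
    show "closed (A ` V)" by (rule closed_image_bounded_below[OF sub cl A c below])
  qed
  have AV: "A ` V \<subseteq> V" unfolding A_def using V.proj_in by auto
  define w where "w = proj V h - proj (A ` V) (proj V h)"
  have wV: "w \<in> V" unfolding w_def using V.proj_in S.proj_in AV sub by (blast intro: subspace_diff)
  \<comment> \<open>w is orthogonal to the range of A, in particular to A w, so coercivity forces w = 0\<close>
  have "A w \<in> A ` V" using wV by blast
  from S.proj_orth[OF this, of "proj V h"] have "inner w (A w) = 0" by (simp add: w_def)
  hence "inner (M w) w = 0" using inner_A[OF wV, of w] by (simp add: inner_commute)
  hence "c * (norm w)^2 \<le> 0" using coerc wV by force
  hence "w = 0" using c by (simp add: mult_le_0_iff)
  hence "proj V h = proj (A ` V) (proj V h)" unfolding w_def by simp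
  hence "proj V h \<in> A ` V" using S.proj_in by metis
  then obtain u where uV: "u \<in> V" and hu: "proj V h = A u" by auto
  show ?thesis
  proof (intro bexI[OF _ uV] ballI)
    fix v assume "v \<in> V"
    then show "inner (M u) v = inner h v" using hu inner_A[of v u] V.inner_proj_left[of v h] by simp
  qed
qed

section \<open>Sequences and the uniform boundedness principle\<close>

lemma LIMSEQ_subsequence_criterion:
  fixes X :: "nat \<Rightarrow> 'm::metric_space"
  assumes "\<And>r::nat\<Rightarrow>nat. strict_mono r \<Longrightarrow> \<exists>s::nat\<Rightarrow>nat. strict_mono s \<and> (X \<circ> r \<circ> s) \<longlonglongrightarrow> L"
  shows "X \<longlonglongrightarrow> L"
proof (rule ccontr)
  assume "\<not> X \<longlonglongrightarrow> L"
  then obtain e where e: "e > 0" and inf: "\<forall>N. \<exists>n\<ge>N. \<not> dist (X n) L < e"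
    unfolding lim_sequentially by blast
  have "infinite {n. e \<le> dist (X n) L}"
    unfolding infinite_nat_iff_unbounded_le using inf by (auto simp: not_less)
  then obtain r :: "nat \<Rightarrow> nat" where r: "strict_mono r" and far: "\<And>n. e \<le> dist (X (r n)) L"
    using infinite_enumerate by blast
  obtain s where "(X \<circ> r \<circ> s) \<longlonglongrightarrow> L" using assms[OF r] by blast
  then obtain N where "dist (X (r (s N))) L < e" using e unfolding lim_sequentially by auto
  with far[of "s N"] show False by simp
qed

lemma onorm_nearly_attained_in_ball:
  fixes T :: "'x::real_normed_vector \<Rightarrow> 'y::real_normed_vector"
  assumes T: "bounded_linear T" and r: "r > 0"
  shows "\<exists>y. dist y x \<le> r \<and> (2/3) * r * onorm T \<le> norm (T y)"
proof (cases "onorm T = 0")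
  case True then show ?thesis by (intro exI[of _ x]) (simp add: r less_imp_le)
next
  case False
  hence O: "onorm T > 0" using onorm_pos_le[OF T] by simp
  have "\<exists>\<xi>. norm (T \<xi>) > (3/4) * onorm T * norm \<xi>"
  proof (rule ccontr)
    assume "\<not> ?thesis"
    hence "onorm T \<le> (3/4) * onorm T" using O by (intro onorm_bound) (auto simp: not_less)
    with O show False by simp
  qed
  then obtain \<xi> where xi: "norm (T \<xi>) > (3/4) * onorm T * norm \<xi>" by blast
  hence xi0: "\<xi> \<noteq> 0" using T by (auto simp: linear_simps)
  define \<eta> where "\<eta> = (r / norm \<xi>) *\<^sub>R \<xi>"
  have neta: "norm \<eta> = r" using xi0 r by (simp add: \<eta>_def)
  have "norm (T \<eta>) = (r / norm \<xi>) * norm (T \<xi>)"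
    using r T by (simp add: \<eta>_def linear_simps)
  also have "\<dots> > (r / norm \<xi>) * ((3/4) * onorm T * norm \<xi>)"
    using xi r xi0 by (intro mult_strict_left_mono) auto
  finally have "norm (T \<eta>) > (3/4) * r * onorm T" using xi0 by simp
  moreover have "(2/3) * (r * onorm T) \<le> (3/4) * (r * onorm T)" using O r by simp
  ultimately have big: "(2/3) * r * onorm T \<le> norm (T \<eta>)" by linarith
  \<comment> \<open>T \<eta> is the half-difference of T (x + \<eta>) and T (x - \<eta>), so one of them is at least as large\<close>
  have "2 *\<^sub>R T \<eta> = T (x + \<eta>) - T (x - \<eta>)" by (simp add: linear_simps T scaleR_2)
  hence "2 * norm (T \<eta>) \<le> norm (T (x + \<eta>)) + norm (T (x - \<eta>))"
    by (metis norm_scaleR norm_triangle_ineq4 abs_numeral)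
  hence "norm (T \<eta>) \<le> norm (T (x + \<eta>)) \<or> norm (T \<eta>) \<le> norm (T (x - \<eta>))" by linarith
  moreover have "dist (x + \<eta>) x = r" "dist (x - \<eta>) x = r" using neta by (simp_all add: dist_norm)
  ultimately show ?thesis using big by (metis order_trans order_refl)
qed

lemma Cauchy_geometric_steps:
  fixes x :: "nat \<Rightarrow> 'm::metric_space"
  assumes step: "\<And>k. dist (x (Suc k)) (x k) \<le> (1/3)^(Suc k)"
  shows dist_geometric_tail: "dist (x k) (x (k + j)) \<le> (1/2) * (1/3)^k"
    and Cauchy_geometric: "Cauchy x"
proof -
  have tail: "dist (x k) (x (k + j)) \<le> (1/2) * (1/3)^k * (1 - (1/3)^j)" for k j
  proof (induction j)
    case (Suc j)
    have "dist (x k) (x (k + Suc j)) \<le> dist (x k) (x (k + j)) + dist (x (k + j)) (x (Suc (k + j)))"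
      by (simp add: dist_triangle)
    also have "\<dots> \<le> (1/2) * (1/3)^k * (1 - (1/3)^j) + (1/3)^(Suc (k + j))"
      using Suc.IH step[of "k + j"] by (simp add: dist_commute)
    also have "\<dots> = (1/2) * (1/3)^k * (1 - (1/3)^(Suc j))" by (simp add: power_add field_simps)
    finally show ?case .
  qed simp
  show tail2: "dist (x k) (x (k + j)) \<le> (1/2) * (1/3)^k" for k j
  proof -
    have "(1/3::real)^k * (1 - (1/3)^j) \<le> (1/3)^k" by (rule mult_left_le) auto
    with tail[of k j] show ?thesis by linarith
  qed
  show "Cauchy x"
  proof (rule metric_CauchyI)
    fix e :: real assume e: "e > 0"
    obtain N where N: "(1/3::real)^N < e" using real_arch_pow_inv[OF e, of "1/3"] by auto
    show "\<exists>M. \<forall>m\<ge>M. \<forall>n\<ge>M. dist (x m) (x n) < e"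
    proof (intro exI allI impI)
      fix m n assume "N \<le> m" "N \<le> n"
      then obtain i j where ij: "m = N + i" "n = N + j" by (metis le_add_diff_inverse)
      have "dist (x m) (x n) \<le> dist (x N) (x m) + dist (x N) (x n)" by (rule dist_triangle3)
      also have "\<dots> \<le> (1/2) * (1/3)^N + (1/2) * (1/3)^N" using tail2 ij by (metis add_mono)
      finally show "dist (x m) (x n) < e" using N by simp
    qed
  qed
qed

text \<open>Sokal's proof: a sequence x k with steps (1/3)^k along which S k (x (Suc k)) is nearly as
  large as possible converges to a point z at which every S k is still large.\<close>

lemma exists_point_large_for_all_operators:
  fixes S :: "nat \<Rightarrow> 'x::{real_normed_vector,complete_space} \<Rightarrow> 'y::real_normed_vector"
  assumes bl: "\<And>k. bounded_linear (S k)"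
  shows "\<exists>z. \<forall>k. onorm (S k) * (1/3)^k \<le> 18 * norm (S k z)"
proof -
  define pick where "pick x k = (SOME y. dist y x \<le> (1/3)^(Suc k)
    \<and> (2/3) * (1/3)^(Suc k) * onorm (S k) \<le> norm (S k y))" for x k
  have pick: "dist (pick x k) x \<le> (1/3)^(Suc k)
      \<and> (2/3) * (1/3)^(Suc k) * onorm (S k) \<le> norm (S k (pick x k))" for x k
    unfolding pick_def by (rule someI_ex[OF onorm_nearly_attained_in_ball[OF bl]]) simp
  define xs where "xs = rec_nat 0 (\<lambda>k x. pick x k)"
  have xsS: "xs (Suc k) = pick (xs k) k" for k by (simp add: xs_def)
  have step: "dist (xs (Suc k)) (xs k) \<le> (1/3)^(Suc k)" for k using pick xsS by simp
  have big: "(2/3) * (1/3)^(Suc k) * onorm (S k) \<le> norm (S k (xs (Suc k)))" for k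
    using pick xsS by simp
  obtain z where z: "xs \<longlonglongrightarrow> z"
    using Cauchy_geometric[OF step] Cauchy_convergent_iff convergent_def by blast
  have zd: "dist (xs k) z \<le> (1/2) * (1/3)^k" for k
  proof (rule LIMSEQ_le_const2)
    show "(\<lambda>n. dist (xs k) (xs n)) \<longlonglongrightarrow> dist (xs k) z" using z by (intro tendsto_intros)
    show "\<exists>N. \<forall>n\<ge>N. dist (xs k) (xs n) \<le> 1 / 2 * (1 / 3) ^ k"
      by (intro exI[of _ k] allI impI) (metis le_add_diff_inverse dist_geometric_tail[OF step])
  qed
  have "onorm (S k) * (1/3)^k \<le> 18 * norm (S k z)" for k
  proof -
    let ?O = "onorm (S k)"
    have "norm (S k (xs (Suc k) - z)) \<le> ?O * norm (xs (Suc k) - z)" by (rule onorm[OF bl])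
    also have "\<dots> \<le> ?O * ((1/2) * (1/3)^(Suc k))"
      using zd[of "Suc k"] onorm_pos_le[OF bl] by (intro mult_left_mono) (auto simp: dist_norm)
    finally have near: "norm (S k (xs (Suc k) - z)) \<le> ?O * ((1/2) * (1/3)^(Suc k))" .
    have "norm (S k (xs (Suc k))) \<le> norm (S k z) + norm (S k (xs (Suc k) - z))"
      by (metis bl linear_simps(2) norm_triangle_sub add.commute)
    hence "(2/3) * ((1/3)^(Suc k) * ?O) \<le> norm (S k z) + (1/2) * ((1/3)^(Suc k) * ?O)"
      using big[of k] near by (simp add: mult_ac)
    moreover have "?O * (1/3)^k = 18 * ((1/6) * ((1/3)^(Suc k) * ?O))" by simp
    ultimately show ?thesis by linarith
  qed
  thus ?thesis by blast
qed

lemma uniform_boundedness: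
  fixes T :: "nat \<Rightarrow> 'x::{real_normed_vector,complete_space} \<Rightarrow> 'y::real_normed_vector"
  assumes bl: "\<And>n. bounded_linear (T n)" and pointwise: "\<And>x. \<exists>B. \<forall>n. norm (T n x) \<le> B"
  shows "\<exists>B. \<forall>n. onorm (T n) \<le> B"
proof (rule ccontr)
  assume "\<not> ?thesis"
  hence "\<forall>k::nat. \<exists>n. onorm (T n) > 4^k" by (metis not_le)
  then obtain nn where nn: "\<And>k. onorm (T (nn k)) > 4^k" by metis
  obtain z where z: "\<And>k. onorm (T (nn k)) * (1/3)^k \<le> 18 * norm (T (nn k) z)"
    using exists_point_large_for_all_operators[of "\<lambda>k. T (nn k)"] bl by blast
  obtain B where B: "\<And>n. norm (T n z) \<le> B" using pointwise by blast
  have "(4/3)^k \<le> 18 * B" for k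
  proof -
    have "(4/3::real)^k = 4^k * (1/3)^k" by (simp add: power_divide)
    also have "\<dots> \<le> onorm (T (nn k)) * (1/3)^k" using nn[of k] by (intro mult_right_mono) auto
    also have "\<dots> \<le> 18 * B" using z[of k] B[of "nn k"] by linarith
    finally show ?thesis .
  qed
  moreover obtain k where "18 * B < (4/3::real)^k" using real_arch_pow[of "4/3::real" "18 * B"] by auto
  ultimately show False by (metis not_le)
qed

lemma norm_le_onorm_inner:
  fixes v :: "'a::real_inner"
  shows "norm v \<le> onorm (\<lambda>y. inner v y)"
proof -
  have bl: "bounded_linear (\<lambda>y. inner v y)" by (rule bounded_linear_inner_right)
  have "norm v * norm v \<le> onorm (\<lambda>y. inner v y) * norm v"
    using onorm[OF bl, of v] by (simp add: norm_eq_sqrt_inner)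
  thus ?thesis using onorm_pos_le[OF bl] by (cases "v = 0") (auto simp: mult_le_cancel_right)
qed

lemma weakly_convergent_operators_uniformly_bounded:
  fixes T :: "nat \<Rightarrow> 'a::{real_inner,complete_space} \<Rightarrow> 'a"
  assumes bl: "\<And>n. bounded_linear (T n)" and weak: "\<And>x y. (\<lambda>n. inner (T n x) y) \<longlonglongrightarrow> L x y"
  shows "\<exists>B\<ge>0. \<forall>n x. norm (T n x) \<le> B * norm x"
proof -
  have pointwise: "\<exists>B. \<forall>n. norm (T n x) \<le> B" for x
  proof -
    have "\<exists>B. \<forall>n. onorm (\<lambda>y. inner (T n x) y) \<le> B"
    proof (rule uniform_boundedness)
      fix y show "\<exists>B. \<forall>n. norm (inner (T n x) y) \<le> B"
        using convergent_imp_Bseq[OF convergentI[OF weak]] by (fastforce simp: Bseq_def)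
    qed (rule bounded_linear_inner_right)
    thus ?thesis using norm_le_onorm_inner order_trans by metis
  qed
  have "\<exists>B. \<forall>n. onorm (T n) \<le> B" using uniform_boundedness[of T] bl pointwise by blast
  then obtain B where B: "\<And>n. onorm (T n) \<le> B" by blast
  have "norm (T n x) \<le> max B 0 * norm x" for n x
  proof -
    have "norm (T n x) \<le> onorm (T n) * norm x" by (rule onorm[OF bl])
    also have "\<dots> \<le> max B 0 * norm x" using B[of n] by (intro mult_right_mono) auto
    finally show ?thesis .
  qed
  thus ?thesis by (intro exI[of _ "max B 0"]) simp
qed

section \<open>Complex structures and complex-linear operators\<close>

locale cstruct =
  fixes J :: "'a::real_inner \<Rightarrow> 'a"
  assumes complex_structure: "complex_structure J"
begin

lemma J_J[simp]: "J (J x) = - x" using complex_structure by (simp add: complex_structure_def)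
lemma inner_J_J[simp]: "inner (J x) (J y) = inner x y"
  using complex_structure by (simp add: complex_structure_def)

lemma inner_J_right: "inner x (J y) = - inner (J x) y"
proof -
  have "inner x (J y) = inner (J x) (J (J y))" by (rule inner_J_J[symmetric])
  also have "\<dots> = - inner (J x) y" by (simp add: inner_minus_right)
  finally show ?thesis .
qed

lemma cinner_Re[simp]: "Re (cinner J x y) = inner x y" by (simp add: cinner_def)
lemma cinner_Im[simp]: "Im (cinner J x y) = inner x (J y)" by (simp add: cinner_def)

lemma cinner_commute: "cinner J y x = cnj (cinner J x y)"
proof -
  have "inner y (J x) = - inner x (J y)"
    using inner_J_right[of y x] inner_commute[of "J y" x] by simp
  then show ?thesis by (simp add: complex_eq_iff inner_commute)
qed

lemma cinner_diff_left: "cinner J (x - y) z = cinner J x z - cinner J y z"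
  by (simp add: complex_eq_iff inner_diff_left)

lemma scaleC_ii: "scaleC J \<i> x = J x" by (simp add: scaleC_def)
lemma scaleC_of_real: "scaleC J (complex_of_real r) x = r *\<^sub>R x" by (simp add: scaleC_def)

lemma cinner_eq_0_iff: "cinner J x y = 0 \<longleftrightarrow> inner x y = 0 \<and> inner x (J y) = 0"
  by (auto simp: cinner_def complex_eq_iff)

lemma orth_proj_cinner:
  assumes S: "\<And>a b. a \<in> S \<Longrightarrow> b \<in> S \<Longrightarrow> a - b \<in> S"
    and p: "p \<in> S" and o: "\<forall>s\<in>S. cinner J (x - p) s = 0"
  shows "orth_proj (cinner J) S x = p"
  unfolding orth_proj_def
proof (rule the_equality)
  show "p \<in> S \<and> (\<forall>s\<in>S. cinner J (x - p) s = 0)" using p o by blast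
  fix p' assume p': "p' \<in> S \<and> (\<forall>s\<in>S. cinner J (x - p') s = 0)"
  have "cinner J (p' - p) (p' - p) = cinner J ((x - p) - (x - p')) (p' - p)" by simp
  also have "\<dots> = 0" using o p' S p by (simp only: cinner_diff_left) simp
  finally have "inner (p' - p) (p' - p) = 0" using cinner_Re by (metis zero_complex.sel(1))
  thus "p' = p" by simp
qed

end

lemma re_ge_imp_inner: "cstruct J \<Longrightarrow> re_ge J T \<mu> \<Longrightarrow> \<mu> * (norm x)^2 \<le> inner (T x) x"
  unfolding re_ge_def using cstruct.cinner_Re by metis

locale clinear_operator = J: cstruct J + K: cstruct K
  for J :: "'a::real_inner \<Rightarrow> 'a" and K :: "'b::real_inner \<Rightarrow> 'b" +
  fixes dm :: "'a set" and T :: "'a \<Rightarrow> 'b"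
  assumes clinear_op: "clinear_op J K dm T"
begin

lemma dm_0: "0 \<in> dm" using clinear_op by (simp add: clinear_op_def)
lemma dm_add: "x \<in> dm \<Longrightarrow> y \<in> dm \<Longrightarrow> x + y \<in> dm" using clinear_op by (simp add: clinear_op_def)
lemma T_add: "x \<in> dm \<Longrightarrow> y \<in> dm \<Longrightarrow> T (x + y) = T x + T y"
  using clinear_op by (simp add: clinear_op_def)
lemma dm_J: "x \<in> dm \<Longrightarrow> J x \<in> dm" using clinear_op unfolding clinear_op_def by (metis J.scaleC_ii)
lemma T_J: "x \<in> dm \<Longrightarrow> T (J x) = K (T x)"
  using clinear_op unfolding clinear_op_def by (metis J.scaleC_ii K.scaleC_ii)
lemma dm_scaleR: "x \<in> dm \<Longrightarrow> r *\<^sub>R x \<in> dm"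
  using clinear_op unfolding clinear_op_def by (metis J.scaleC_of_real)
lemma T_scaleR: "x \<in> dm \<Longrightarrow> T (r *\<^sub>R x) = r *\<^sub>R T x"
  using clinear_op unfolding clinear_op_def by (metis J.scaleC_of_real K.scaleC_of_real)
lemma dm_diff: "x \<in> dm \<Longrightarrow> y \<in> dm \<Longrightarrow> x - y \<in> dm"
  using dm_add[of x "-y"] dm_scaleR[of y "-1"] by simp
lemma T_diff: "x \<in> dm \<Longrightarrow> y \<in> dm \<Longrightarrow> T (x - y) = T x - T y"
  using T_add[of x "-y"] dm_scaleR[of y "-1"] T_scaleR[of y "-1"] by simp
lemma T_0: "T 0 = 0" using T_add[OF dm_0 dm_0] by simp

definition graph :: "('a \<times> 'b) set" where "graph = (\<lambda>x. (x, T x)) ` dm"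

lemma subspace_graph_image:
  assumes "S \<subseteq> dm" "subspace S"
  shows "subspace ((\<lambda>x. (x, T x)) ` S)"
  unfolding subspace_def
proof (intro conjI ballI allI)
  show "0 \<in> (\<lambda>x. (x, T x)) ` S"
    using assms T_0 by (auto simp: subspace_def zero_prod_def intro!: image_eqI[of _ _ 0])
  fix c :: real and x y assume "x \<in> (\<lambda>x. (x, T x)) ` S" "y \<in> (\<lambda>x. (x, T x)) ` S"
  then obtain a b where ab: "a \<in> S" "b \<in> S" "x = (a, T a)" "y = (b, T b)" by auto
  show "x + y \<in> (\<lambda>x. (x, T x)) ` S"
    using ab assms T_add[of a b] by (auto simp: subspace_def subsetD intro!: image_eqI[of _ _ "a + b"])
  show "c *\<^sub>R x \<in> (\<lambda>x. (x, T x)) ` S"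
    using ab assms T_scaleR by (auto simp: subspace_def intro!: image_eqI[of _ _ "c *\<^sub>R a"])
qed

lemma subspace_dm: "subspace dm"
  unfolding subspace_def using dm_0 dm_add dm_scaleR by blast

lemma graph_subspace: "subspace graph"
  unfolding graph_def by (rule subspace_graph_image[OF order_refl subspace_dm])

lemma graph_inner_Re: "Re (graph_inner J K T x y) = inner x y + inner (T x) (T y)"
  by (simp add: graph_inner_def)

lemma graph_inner_Im: "y \<in> dm \<Longrightarrow> Im (graph_inner J K T x y) = Re (graph_inner J K T x (J y))"
  by (simp add: graph_inner_def T_J)

lemma graph_inner_diff_left: "x \<in> dm \<Longrightarrow> y \<in> dm \<Longrightarrow>
  graph_inner J K T (x - y) z = graph_inner J K T x z - graph_inner J K T y z"
  by (simp add: graph_inner_def T_diff J.cinner_diff_left K.cinner_diff_left)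

lemma graph_inner_commute: "graph_inner J K T y x = cnj (graph_inner J K T x y)"
  by (simp add: graph_inner_def J.cinner_commute[of y x] K.cinner_commute[of "T y" "T x"])

lemma graph_inner_self_eq_0: "graph_inner J K T x x = 0 \<Longrightarrow> x = 0"
proof -
  assume "graph_inner J K T x x = 0"
  hence "inner x x + inner (T x) (T x) = 0" using graph_inner_Re[of x x] by simp
  hence "inner x x = 0" by (metis add_nonneg_eq_0_iff inner_ge_zero)
  thus "x = 0" by simp
qed

lemma graph_orth_iff:
  assumes W: "W \<subseteq> dm" "\<And>s. s \<in> W \<Longrightarrow> J s \<in> W"
  shows "(\<forall>s\<in>W. graph_inner J K T x s = 0) \<longleftrightarrow> (\<forall>s\<in>W. inner x s + inner (T x) (T s) = 0)"
proof
  assume "\<forall>s\<in>W. graph_inner J K T x s = 0"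
  thus "\<forall>s\<in>W. inner x s + inner (T x) (T s) = 0" using graph_inner_Re by (metis zero_complex.simps(1))
next
  assume H: "\<forall>s\<in>W. inner x s + inner (T x) (T s) = 0"
  show "\<forall>s\<in>W. graph_inner J K T x s = 0"
  proof
    fix s assume s: "s \<in> W"
    have "Re (graph_inner J K T x s) = 0" using H s graph_inner_Re by simp
    moreover have "Im (graph_inner J K T x s) = 0"
      using H W s graph_inner_Im[of s x] graph_inner_Re[of x "J s"] by (simp add: subsetD)
    ultimately show "graph_inner J K T x s = 0" by (simp add: complex_eq_iff)
  qed
qed

lemma orth_proj_graph_inner:
  assumes S: "S \<subseteq> dm" "\<And>a b. a \<in> S \<Longrightarrow> b \<in> S \<Longrightarrow> a - b \<in> S"
    and x: "x \<in> dm" and p: "p \<in> S" and o: "\<forall>s\<in>S. graph_inner J K T (x - p) s = 0"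
  shows "orth_proj (graph_inner J K T) S x = p"
  unfolding orth_proj_def
proof (rule the_equality)
  show "p \<in> S \<and> (\<forall>s\<in>S. graph_inner J K T (x - p) s = 0)" using p o by blast
  fix p' assume p': "p' \<in> S \<and> (\<forall>s\<in>S. graph_inner J K T (x - p') s = 0)"
  have d: "p' - p \<in> S" using S p p' by blast
  have dm1: "x - p \<in> dm" "x - p' \<in> dm" using S x p p' dm_diff by auto
  have "graph_inner J K T (p' - p) (p' - p) = graph_inner J K T ((x - p) - (x - p')) (p' - p)" by simp
  also have "\<dots> = graph_inner J K T (x - p) (p' - p) - graph_inner J K T (x - p') (p' - p)"
    using dm1 by (rule graph_inner_diff_left)
  also have "\<dots> = 0" using o p' d by simp
  finally have "p' - p = 0" by (rule graph_inner_self_eq_0)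
  thus "p' = p" by simp
qed

text \<open>adj_rel y z encodes T^* y = z through real inner products only.\<close>

definition adj_rel :: "'b \<Rightarrow> 'a \<Rightarrow> bool" where
  "adj_rel y z \<longleftrightarrow> (\<forall>x\<in>dm. inner (T x) y = inner x z)"

lemma adj_rel_J: "adj_rel y z \<Longrightarrow> adj_rel (K y) (J z)"
  unfolding adj_rel_def
proof
  fix x assume r: "\<forall>x\<in>dm. inner (T x) y = inner x z" and x: "x \<in> dm"
  have "inner (T x) (K y) = - inner (K (T x)) y" by (rule K.inner_J_right)
  also have "\<dots> = - inner (T (J x)) y" using T_J[OF x] by simp
  also have "\<dots> = - inner (J x) z" using r dm_J[OF x] by simp
  also have "\<dots> = inner x (J z)" by (simp add: J.inner_J_right)
  finally show "inner (T x) (K y) = inner x (J z)" .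
qed

lemma adj_rel_iff_cinner: "(\<forall>x\<in>dm. cinner K (T x) y = cinner J x z) \<longleftrightarrow> adj_rel y z"
proof
  assume "\<forall>x\<in>dm. cinner K (T x) y = cinner J x z"
  thus "adj_rel y z" unfolding adj_rel_def by (metis J.cinner_Re K.cinner_Re)
next
  assume r: "adj_rel y z"
  show "\<forall>x\<in>dm. cinner K (T x) y = cinner J x z"
  proof
    fix x assume x: "x \<in> dm"
    have "inner (T x) (K y) = inner x (J z)" using adj_rel_J[OF r] x by (simp add: adj_rel_def)
    thus "cinner K (T x) y = cinner J x z" using r x by (simp add: adj_rel_def complex_eq_iff)
  qed
qed

lemma adj_dom_eq: "adj_dom (cinner J) (cinner K) dm T = {y. \<exists>z. adj_rel y z}"
  unfolding adj_dom_def using adj_rel_iff_cinner by blast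

lemma adj_rel_add: "adj_rel y z \<Longrightarrow> adj_rel y' z' \<Longrightarrow> adj_rel (y + y') (z + z')"
  unfolding adj_rel_def by (simp add: inner_add_right)
lemma adj_rel_scaleR: "adj_rel y z \<Longrightarrow> adj_rel (r *\<^sub>R y) (r *\<^sub>R z)"
  unfolding adj_rel_def by simp
lemma adj_rel_diff: "adj_rel y z \<Longrightarrow> adj_rel y' z' \<Longrightarrow> adj_rel (y - y') (z - z')"
  unfolding adj_rel_def by (simp add: inner_diff_right)

lemma subspace_adj_dom: "subspace {y. \<exists>z. adj_rel y z}"
  unfolding subspace_def
proof (intro conjI ballI allI)
  show "0 \<in> {y. \<exists>z. adj_rel y z}" unfolding adj_rel_def by (auto intro: exI[of _ 0])
qed (use adj_rel_add adj_rel_scaleR in blast)+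

end

locale closed_operator = clinear_operator J K dm T
  for J :: "'a::{real_inner,complete_space} \<Rightarrow> 'a" and K :: "'b::{real_inner,complete_space} \<Rightarrow> 'b"
  and dm T +
  assumes densely_defined_closed: "densely_defined_closed J K dm T"
begin

lemma dense: "closure dm = UNIV"
  using densely_defined_closed by (simp add: densely_defined_closed_def)
lemma graph_closed: "closed graph"
  using densely_defined_closed by (simp add: densely_defined_closed_def graph_def)

lemma adj_rel_unique: "adj_rel y z \<Longrightarrow> adj_rel y z' \<Longrightarrow> z = z'"
proof -
  assume r: "adj_rel y z" "adj_rel y z'"
  have "dm \<subseteq> {x. inner x (z - z') = 0}" using r by (auto simp: adj_rel_def inner_diff_right)
  moreover have "closed {x. inner x (z - z') = 0}"
    by (intro closed_Collect_eq continuous_intros)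
  ultimately have "closure dm \<subseteq> {x. inner x (z - z') = 0}" by (rule closure_minimal)
  hence "inner (z - z') (z - z') = 0" using dense by blast
  thus "z = z'" by simp
qed

lemma adj_eq: assumes "adj_rel y z" shows "adj (cinner J) (cinner K) dm T y = z"
  unfolding adj_def
proof (rule the_equality)
  show "\<forall>x\<in>dm. cinner K (T x) y = cinner J x z" using assms adj_rel_iff_cinner by blast
  fix z' assume "\<forall>x\<in>dm. cinner K (T x) y = cinner J x z'"
  hence "adj_rel y z'" using adj_rel_iff_cinner by blast
  thus "z' = z" using adj_rel_unique assms by blast
qed

text \<open>T = T^**: the pair (x, f) is tested against the graph of T^*.\<close>

lemma closed_graph_double_adjoint:
  assumes H: "\<And>y z. adj_rel y z \<Longrightarrow> inner x z = inner f y"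
  shows "x \<in> dm \<and> T x = f"
proof -
  interpret Gr: closed_subspace graph by (rule closed_subspace.intro[OF graph_subspace graph_closed])
  obtain p where p: "p \<in> dm" "proj graph (x, f) = (p, T p)"
    using Gr.proj_in[of "(x, f)"] unfolding graph_def by auto
  obtain r s where rs: "(x, f) - (p, T p) = (r, s)" by (metis surj_pair)
  have orth: "inner x' r + inner (T x') s = 0" if "x' \<in> dm" for x'
  proof -
    have "(x', T x') \<in> graph" using that by (simp add: graph_def)
    from Gr.proj_orth[OF this, of "(x, f)"] show ?thesis using p rs by (simp add: inner_commute)
  qed
  have "adj_rel s (- r)" unfolding adj_rel_def using orth by (simp add: add.commute eq_neg_iff_add_eq_0)
  from H[OF this] have "inner (x, f) (r, s) = 0" by (simp add: inner_minus_right)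
  moreover have "inner (p, T p) (r, s) = 0" using orth[OF p(1)] by (simp add: inner_commute)
  ultimately have "inner ((x, f) - (p, T p)) (r, s) = 0" by (simp only: inner_diff_left)
  hence "inner (r, s) (r, s) = 0" using rs by simp
  hence "inner r r = 0 \<and> inner s s = 0" by (metis add_nonneg_eq_0_iff inner_ge_zero inner_Pair)
  hence "r = 0" "s = 0" by simp_all
  thus ?thesis using rs p by simp
qed

end

context closed_operator
begin

lemma graph_orth_decomp:
  assumes S: "S \<subseteq> dm" "subspace S" "closed ((\<lambda>x. (x, T x)) ` S)" and x: "x \<in> dm"
  obtains c where "c \<in> S" "x - c \<in> dm" "\<forall>s\<in>S. inner (x - c) s + inner (T (x - c)) (T s) = 0"
proof -
  interpret W: closed_subspace "(\<lambda>x. (x, T x)) ` S"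
    by (rule closed_subspace.intro[OF subspace_graph_image[OF S(1,2)] S(3)])
  obtain c where c: "c \<in> S" "proj ((\<lambda>x. (x, T x)) ` S) (x, T x) = (c, T c)"
    using W.proj_in[of "(x, T x)"] by auto
  have cdm: "c \<in> dm" using S c by blast
  have "inner (x - c) s + inner (T (x - c)) (T s) = 0" if "s \<in> S" for s
    using W.proj_orth[of "(s, T s)" "(x, T x)"] that c T_diff[OF x cdm] by simp
  with c dm_diff[OF x cdm] that show ?thesis by blast
qed

end

section \<open>Boundary data spaces\<close>

locale boundary_setting =
  G: closed_operator J0 J1 dG G + D: closed_operator J1 J0 dD D
  for J0 :: "'a::{real_inner,complete_space} \<Rightarrow> 'a" and J1 :: "'b::{real_inner,complete_space} \<Rightarrow> 'b"
  and dG G dD D +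
  assumes D_extends_adj: "\<forall>y \<in> dom_Dcirc J0 J1 dG G. y \<in> dD \<and> D y = - adj (cinner J0) (cinner J1) dG G y"
    and compact_emb: "\<forall>S \<subseteq> dG. bounded ((\<lambda>x. (x, G x)) ` S) \<longrightarrow> compact (closure S)"
begin

definition dom_Gc :: "'a set" where "dom_Gc = {\<psi>. \<exists>z. D.adj_rel \<psi> z}"
definition dom_Dc :: "'b set" where "dom_Dc = {y. \<exists>z. G.adj_rel y z}"

lemma dom_Gcirc_eq: "dom_Gcirc J0 J1 dD D = dom_Gc"
  unfolding dom_Gcirc_def dom_Gc_def by (rule D.adj_dom_eq)
lemma dom_Dcirc_eq: "dom_Dcirc J0 J1 dG G = dom_Dc"
  unfolding dom_Dcirc_def dom_Dc_def by (rule G.adj_dom_eq)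

lemma D_extends_adj_G: "G.adj_rel y z \<Longrightarrow> y \<in> dD \<and> D y = - z"
proof -
  assume r: "G.adj_rel y z"
  hence "y \<in> dom_Dcirc J0 J1 dG G" using dom_Dcirc_eq dom_Dc_def by auto
  with D_extends_adj have "y \<in> dD \<and> D y = - adj (cinner J0) (cinner J1) dG G y" by blast
  thus ?thesis using G.adj_eq[OF r] by simp
qed

text \<open>Dually, G extends -D^*: taking adjoints in -G^* \<subseteq> D gives -D^* \<subseteq> G^** = G.\<close>

lemma G_extends_adj_D: "D.adj_rel \<psi> z \<Longrightarrow> \<psi> \<in> dG \<and> G \<psi> = - z"
proof -
  assume r: "D.adj_rel \<psi> z"
  show ?thesis
  proof (rule G.closed_graph_double_adjoint)
    fix y z' assume r': "G.adj_rel y z'"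
    from D_extends_adj_G[OF r'] have y: "y \<in> dD" "D y = - z'" by auto
    from r y(1) have "inner (D y) \<psi> = inner y z" by (simp add: D.adj_rel_def)
    hence "- inner z' \<psi> = inner y z" using y(2) by simp
    thus "inner \<psi> z' = inner (- z) y" by (simp add: inner_commute)
  qed
qed

lemma dom_Gc_dG: "\<psi> \<in> dom_Gc \<Longrightarrow> \<psi> \<in> dG" using G_extends_adj_D dom_Gc_def by blast
lemma dom_Dc_dD: "y \<in> dom_Dc \<Longrightarrow> y \<in> dD" using D_extends_adj_G dom_Dc_def by blast
lemma dom_Gc_J: "\<psi> \<in> dom_Gc \<Longrightarrow> J0 \<psi> \<in> dom_Gc" unfolding dom_Gc_def using D.adj_rel_J by blast
lemma dom_Dc_J: "y \<in> dom_Dc \<Longrightarrow> J1 y \<in> dom_Dc" unfolding dom_Dc_def using G.adj_rel_J by blast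
lemma dom_Gc_diff: "a \<in> dom_Gc \<Longrightarrow> b \<in> dom_Gc \<Longrightarrow> a - b \<in> dom_Gc"
  unfolding dom_Gc_def using D.adj_rel_diff by blast
lemma subspace_dom_Gc: "subspace dom_Gc" unfolding dom_Gc_def by (rule D.subspace_adj_dom)
lemma subspace_dom_Dc: "subspace dom_Dc" unfolding dom_Dc_def by (rule G.subspace_adj_dom)

definition graph_Gc :: "('a \<times> 'b) set" where "graph_Gc = (\<lambda>x. (x, G x)) ` dom_Gc"

lemma graph_Gc_eq: "graph_Gc = (\<Inter>x\<in>dD. {p. inner (D x) (fst p) + inner x (snd p) = 0})"
proof (intro set_eqI iffI)
  fix p assume "p \<in> graph_Gc"
  then obtain \<psi> z where p: "p = (\<psi>, G \<psi>)" and r: "D.adj_rel \<psi> z"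
    unfolding graph_Gc_def dom_Gc_def by auto
  have "G \<psi> = - z" using G_extends_adj_D[OF r] by simp
  thus "p \<in> (\<Inter>x\<in>dD. {p. inner (D x) (fst p) + inner x (snd p) = 0})"
    using r p by (auto simp: D.adj_rel_def)
next
  fix p assume H: "p \<in> (\<Inter>x\<in>dD. {p. inner (D x) (fst p) + inner x (snd p) = 0})"
  obtain \<psi> w where p: "p = (\<psi>, w)" by (cases p)
  have r: "D.adj_rel \<psi> (- w)" unfolding D.adj_rel_def using H p by (auto simp: eq_neg_iff_add_eq_0)
  from G_extends_adj_D[OF r] have "G \<psi> = w" by simp
  thus "p \<in> graph_Gc" unfolding graph_Gc_def dom_Gc_def using r p by (auto intro!: image_eqI[of _ _ \<psi>])
qed

lemma graph_Dc_eq: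
  "(\<lambda>x. (x, D x)) ` dom_Dc = (\<Inter>x\<in>dG. {p. inner (G x) (fst p) + inner x (snd p) = 0})"
proof (intro set_eqI iffI)
  fix p assume "p \<in> (\<lambda>x. (x, D x)) ` dom_Dc"
  then obtain y z where p: "p = (y, D y)" and r: "G.adj_rel y z" unfolding dom_Dc_def by auto
  have "D y = - z" using D_extends_adj_G[OF r] by simp
  thus "p \<in> (\<Inter>x\<in>dG. {p. inner (G x) (fst p) + inner x (snd p) = 0})"
    using r p by (auto simp: G.adj_rel_def)
next
  fix p assume H: "p \<in> (\<Inter>x\<in>dG. {p. inner (G x) (fst p) + inner x (snd p) = 0})"
  obtain y w where p: "p = (y, w)" by (cases p)
  have r: "G.adj_rel y (- w)" unfolding G.adj_rel_def using H p by (auto simp: eq_neg_iff_add_eq_0)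
  from D_extends_adj_G[OF r] have "D y = w" by simp
  thus "p \<in> (\<lambda>x. (x, D x)) ` dom_Dc" unfolding dom_Dc_def using r p by (auto intro!: image_eqI[of _ _ y])
qed

lemma graph_Gc_closed: "closed graph_Gc"
  unfolding graph_Gc_eq by (intro closed_INT ballI closed_Collect_eq continuous_intros)

lemma graph_Gc_subspace: "subspace graph_Gc"
  unfolding graph_Gc_def using dom_Gc_dG by (intro G.subspace_graph_image subspace_dom_Gc) blast

lemma BD_G_eq: "BD_G J0 J1 dG G dD D = {x \<in> dG. \<forall>s\<in>dom_Gc. inner x s + inner (G x) (G s) = 0}"
  unfolding BD_G_def orth_compl_in_def dom_Gcirc_eq
  using G.graph_orth_iff[of dom_Gc] dom_Gc_dG dom_Gc_J by blast

lemma BD_D_eq: "BD_D J0 J1 dG G dD D = {x \<in> dD. \<forall>s\<in>dom_Dc. inner x s + inner (D x) (D s) = 0}"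
  unfolding BD_D_def orth_compl_in_def dom_Dcirc_eq
  using D.graph_orth_iff[of dom_Dc] dom_Dc_dD dom_Dc_J by blast

lemma dom_G_decomp:
  assumes "x \<in> dG"
  obtains c where "c \<in> dom_Gc" "x - c \<in> BD_G J0 J1 dG G dD D"
  using G.graph_orth_decomp[OF _ subspace_dom_Gc graph_Gc_closed[unfolded graph_Gc_def] assms]
    dom_Gc_dG unfolding BD_G_eq by blast

lemma dom_D_decomp:
  assumes "x \<in> dD"
  obtains c where "c \<in> dom_Dc" "x - c \<in> BD_D J0 J1 dG G dD D"
proof -
  have "closed ((\<lambda>x. (x, D x)) ` dom_Dc)"
    unfolding graph_Dc_eq by (intro closed_INT ballI closed_Collect_eq continuous_intros)
  then show ?thesis
    using D.graph_orth_decomp[OF _ subspace_dom_Dc _ assms] dom_Dc_dD that unfolding BD_D_eq by blast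
qed

lemma BD_D_subset: "BD_D J0 J1 dG G dD D \<subseteq> dD" using BD_D_eq by blast
lemma BD_G_subset: "BD_G J0 J1 dG G dD D \<subseteq> dG" using BD_G_eq by blast

lemma BD_G_orth: "s \<in> BD_G J0 J1 dG G dD D \<Longrightarrow> c \<in> dom_Gc \<Longrightarrow> graph_inner J0 J1 G c s = 0"
  using G.graph_inner_commute[of c s]
  unfolding BD_G_def orth_compl_in_def dom_Gcirc_eq by force

lemma orth_proj_BD_D:
  assumes x: "x \<in> dD" and q: "q \<in> BD_D J0 J1 dG G dD D" and xq: "x - q \<in> dom_Dc"
  shows "orth_proj (graph_inner J1 J0 D) (BD_D J0 J1 dG G dD D) x = q"
proof (rule D.orth_proj_graph_inner[OF BD_D_subset _ x q])
  show "a - b \<in> BD_D J0 J1 dG G dD D" if "a \<in> BD_D J0 J1 dG G dD D" "b \<in> BD_D J0 J1 dG G dD D" for a b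
    using that unfolding BD_D_eq by (auto simp: D.dm_diff D.T_diff inner_diff_left algebra_simps)
  show "\<forall>s\<in>BD_D J0 J1 dG G dD D. graph_inner J1 J0 D (x - q) s = 0"
    using xq unfolding BD_D_def orth_compl_in_def dom_Dcirc_eq
    by (metis (mono_tags, lifting) D.graph_inner_commute complex_cnj_zero mem_Collect_eq)
qed

end
section \<open>The Dirichlet and Neumann problems\<close>

locale dtn_problem = boundary_setting J0 J1 dG G dD D
  for J0 :: "'a::{real_inner,complete_space} \<Rightarrow> 'a" and J1 :: "'b::{real_inner,complete_space} \<Rightarrow> 'b"
  and dG G dD D +
  fixes a :: "'b \<Rightarrow> 'b" and m :: "'a \<Rightarrow> 'a" and \<mu> :: real
  assumes a_L: "bounded_clinear_op J1 a" and m_L: "bounded_clinear_op J0 m" and mu: "\<mu> > 0"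
    and a_re_ge: "re_ge J1 a \<mu>" and m_re_ge: "re_ge J0 m \<mu>"
begin

lemma a_bounded_linear: "bounded_linear a" using a_L by (simp add: bounded_clinear_op_def)
lemma m_bounded_linear: "bounded_linear m" using m_L by (simp add: bounded_clinear_op_def)
lemma a_coercive: "\<mu> * (norm x)^2 \<le> inner (a x) x" using re_ge_imp_inner[OF _ a_re_ge] G.K.cstruct_axioms by blast
lemma m_coercive: "\<mu> * (norm x)^2 \<le> inner (m x) x" using re_ge_imp_inner[OF _ m_re_ge] G.J.cstruct_axioms by blast
lemma a_diff: "a (x - y) = a x - a y" using a_bounded_linear by (simp add: linear_simps)
lemma m_diff: "m (x - y) = m x - m y" using m_bounded_linear by (simp add: linear_simps)
lemma a_add: "a (x + y) = a x + a y" using a_bounded_linear by (simp add: linear_simps)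
lemma m_add: "m (x + y) = m x + m y" using m_bounded_linear by (simp add: linear_simps)

text \<open>On the graph space H0 \<times> H1 both boundary value problems become Lax--Milgram problems for
  the block operator diag(m, a), restricted to the graph of G (Neumann) or of the minimal operator
  (Dirichlet).\<close>

definition M :: "'a \<times> 'b \<Rightarrow> 'a \<times> 'b" where "M p = (m (fst p), a (snd p))"

lemma bounded_linear_M: "bounded_linear M"
  unfolding M_def
  by (intro bounded_linear_Pair bounded_linear_compose[OF m_bounded_linear bounded_linear_fst]
      bounded_linear_compose[OF a_bounded_linear bounded_linear_snd])

lemma M_coercive: "\<mu> * (norm p)^2 \<le> inner (M p) p"
proof -
  obtain x y where p: "p = (x, y)" by (cases p)
  have "(norm p)^2 = (norm x)^2 + (norm y)^2" using p by (simp add: power2_norm_eq_inner)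
  moreover have "inner (M p) p = inner (m x) x + inner (a y) y" using p by (simp add: M_def)
  ultimately show ?thesis using m_coercive[of x] a_coercive[of y] by (simp add: algebra_simps)
qed

definition neumann_sol :: "'b \<Rightarrow> 'a \<Rightarrow> bool" where
  "neumann_sol q u \<longleftrightarrow> u \<in> dG \<and> (\<forall>v\<in>dG. inner (m u) v + inner (a (G u)) (G v) = inner (D q) v + inner q (G v))"

lemma neumann_sol_exists: "\<exists>u. neumann_sol q u"
proof -
  interpret W: closed_subspace G.graph by (rule closed_subspace.intro[OF G.graph_subspace G.graph_closed])
  obtain \<gamma> where g: "\<gamma> \<in> G.graph" and eq: "\<forall>v\<in>G.graph. inner (M \<gamma>) v = inner (D q, q) v"
    using lax_milgram[OF G.graph_subspace G.graph_closed bounded_linear_M mu] M_coercive by blast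
  obtain u where u: "u \<in> dG" "\<gamma> = (u, G u)" using g unfolding G.graph_def by auto
  have "neumann_sol q u" unfolding neumann_sol_def
  proof (intro conjI ballI)
    show "u \<in> dG" by fact
    fix v assume v: "v \<in> dG"
    hence "(v, G v) \<in> G.graph" by (simp add: G.graph_def)
    from eq[rule_format, OF this] show "inner (m u) v + inner (a (G u)) (G v) = inner (D q) v + inner q (G v)"
      using u by (simp add: M_def)
  qed
  thus ?thesis by blast
qed

lemma energy_eq_0_imp_0:
  assumes "inner (m w) w + inner (a (G w)) (G w) = 0"
  shows "w = 0"
proof -
  have "\<mu> * (norm w)^2 \<le> 0"
    using assms m_coercive[of w] a_coercive[of "G w"] mu by (smt (verit) mult_nonneg_nonneg zero_le_power2)
  thus ?thesis using mu by (simp add: mult_le_0_iff)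
qed

lemma neumann_sol_unique: "neumann_sol q u \<Longrightarrow> neumann_sol q u' \<Longrightarrow> u = u'"
proof -
  assume A: "neumann_sol q u" "neumann_sol q u'"
  have u: "u \<in> dG" "u' \<in> dG" using A by (auto simp: neumann_sol_def)
  have "inner (m u) (u - u') + inner (a (G u)) (G (u - u'))
      = inner (m u') (u - u') + inner (a (G u')) (G (u - u'))"
    using A G.dm_diff[OF u] by (simp add: neumann_sol_def)
  hence "inner (m (u - u')) (u - u') + inner (a (G (u - u'))) (G (u - u')) = 0"
    using u by (simp add: m_diff a_diff G.T_diff inner_diff_left)
  from energy_eq_0_imp_0[OF this] show ?thesis by simp
qed

lemma neumann_sol_flux:
  assumes N: "neumann_sol q u" and q: "q \<in> dD"
  shows "a (G u) - q \<in> dom_Dc \<and> a (G u) \<in> dD \<and> D (a (G u)) = m u"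
proof -
  have u: "u \<in> dG" using N by (simp add: neumann_sol_def)
  have r: "G.adj_rel (a (G u) - q) (D q - m u)"
    unfolding G.adj_rel_def
  proof
    fix v assume v: "v \<in> dG"
    have "inner (m u) v + inner (a (G u)) (G v) = inner (D q) v + inner q (G v)" using N v by (simp add: neumann_sol_def)
    thus "inner (G v) (a (G u) - q) = inner v (D q - m u)"
      by (simp add: inner_diff_right inner_diff_left inner_commute algebra_simps)
  qed
  from D_extends_adj_G[OF r] have c: "a (G u) - q \<in> dD" "D (a (G u) - q) = m u - D q" by auto
  have "a (G u) = (a (G u) - q) + q" by simp
  hence dd: "a (G u) \<in> dD" using c(1) q D.dm_add by metis
  have "D (a (G u) - q) = D (a (G u)) - D q" using D.T_diff[OF dd q] .
  with c(2) have "D (a (G u)) = m u" by simp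
  thus ?thesis using r dd unfolding dom_Dc_def by blast
qed

lemma neumann_solI_flux:
  assumes u: "u \<in> dG" and dd: "a (G u) \<in> dD" and eq: "m u = D (a (G u))" and q: "q \<in> dD"
    and c: "a (G u) - q \<in> dom_Dc"
  shows "neumann_sol q u"
proof -
  obtain z where r: "G.adj_rel (a (G u) - q) z" using c unfolding dom_Dc_def by blast
  from D_extends_adj_G[OF r] have "D (a (G u) - q) = - z" by simp
  hence "z = - D (a (G u) - q)" by simp
  also have "\<dots> = D q - m u" using D.T_diff[OF dd q] eq by simp
  finally have z: "z = D q - m u" .
  show ?thesis unfolding neumann_sol_def
  proof (intro conjI ballI)
    show "u \<in> dG" by fact
    fix v assume v: "v \<in> dG"
    have "inner (G v) (a (G u) - q) = inner v z" using r v by (simp add: G.adj_rel_def)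
    thus "inner (m u) v + inner (a (G u)) (G v) = inner (D q) v + inner q (G v)"
      using z by (simp add: inner_diff_right inner_diff_left inner_commute algebra_simps)
  qed
qed

definition dirichlet_sol :: "'a \<Rightarrow> 'a \<Rightarrow> bool" where
  "dirichlet_sol u0 u \<longleftrightarrow> u \<in> dG \<and> a (G u) \<in> dD \<and> m u - D (a (G u)) = 0 \<and> u - u0 \<in> dom_Gcirc J0 J1 dD D"

lemma dirichlet_sol_exists: assumes u0: "u0 \<in> dG" shows "\<exists>u. dirichlet_sol u0 u"
proof -
  obtain \<gamma> where g: "\<gamma> \<in> graph_Gc" and eq: "\<forall>v\<in>graph_Gc. inner (M \<gamma>) v = inner (- M (u0, G u0)) v"
    using lax_milgram[OF graph_Gc_subspace graph_Gc_closed bounded_linear_M mu] M_coercive by blast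
  obtain \<phi> where ph: "\<phi> \<in> dom_Gc" "\<gamma> = (\<phi>, G \<phi>)" using g unfolding graph_Gc_def by auto
  have phG: "\<phi> \<in> dG" using dom_Gc_dG ph by blast
  define u where "u = u0 + \<phi>"
  have u: "u \<in> dG" using u0 phG G.dm_add u_def by simp
  have Gu: "G u = G u0 + G \<phi>" using G.T_add[OF u0 phG] u_def by simp
  have weak: "inner (m u) \<psi> + inner (a (G u)) (G \<psi>) = 0" if psi: "\<psi> \<in> dom_Gc" for \<psi>
  proof -
    have "(\<psi>, G \<psi>) \<in> graph_Gc" using psi by (simp add: graph_Gc_def)
    from eq[rule_format, OF this] have "inner (M (\<phi>, G \<phi>)) (\<psi>, G \<psi>) + inner (M (u0, G u0)) (\<psi>, G \<psi>) = 0"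
      using ph by (simp add: inner_minus_left)
    thus ?thesis using Gu u_def by (simp add: M_def m_add a_add inner_add_left algebra_simps)
  qed
  have "a (G u) \<in> dD \<and> D (a (G u)) = m u"
  proof (rule D.closed_graph_double_adjoint)
    fix \<psi> z assume r: "D.adj_rel \<psi> z"
    hence psi: "\<psi> \<in> dom_Gc" unfolding dom_Gc_def by blast
    from G_extends_adj_D[OF r] have "G \<psi> = - z" by simp
    with weak[OF psi] show "inner (a (G u)) z = inner (m u) \<psi>" by (simp add: inner_minus_right)
  qed
  moreover have "u - u0 \<in> dom_Gcirc J0 J1 dD D" using ph u_def dom_Gcirc_eq by simp
  ultimately show ?thesis using u unfolding dirichlet_sol_def by auto
qed

lemma dirichlet_sol_unique: "dirichlet_sol u0 u \<Longrightarrow> dirichlet_sol u0 u' \<Longrightarrow> u = u'"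
proof -
  assume A: "dirichlet_sol u0 u" "dirichlet_sol u0 u'"
  define w where "w = u - u'"
  have u: "u \<in> dG" "u' \<in> dG" "a (G u) \<in> dD" "a (G u') \<in> dD" "m u = D (a (G u))" "m u' = D (a (G u'))"
    using A by (auto simp: dirichlet_sol_def)
  have wG: "w \<in> dom_Gc" using A dom_Gcirc_eq dom_Gc_diff[of "u - u0" "u' - u0"] w_def by (simp add: dirichlet_sol_def)
  then obtain z where r: "D.adj_rel w z" unfolding dom_Gc_def by blast
  from G_extends_adj_D[OF r] have Gw: "G w = - z" by simp
  have Gw': "G w = G u - G u'" using G.T_diff u w_def by simp
  have sig: "a (G w) \<in> dD" "D (a (G w)) = m w"
    using u Gw' by (simp_all add: a_diff D.dm_diff D.T_diff m_diff w_def)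
  have "inner (D (a (G w))) w = inner (a (G w)) z" using r sig(1) by (simp add: D.adj_rel_def)
  hence "inner (m w) w + inner (a (G w)) (G w) = 0" using sig Gw by (simp add: inner_minus_right)
  from energy_eq_0_imp_0[OF this] show ?thesis by (simp add: w_def)
qed

lemma DtN_eq_proj_flux: "u0 \<in> dG \<Longrightarrow> dirichlet_sol u0 u \<Longrightarrow>
   DtN J0 J1 dG G dD D a m u0 = orth_proj (graph_inner J1 J0 D) (BD_D J0 J1 dG G dD D) (a (G u))"
proof -
  assume u0: "u0 \<in> dG" and S: "dirichlet_sol u0 u"
  have "(THE u. u \<in> dG \<and> a (G u) \<in> dD \<and> m u - D (a (G u)) = 0 \<and> u - u0 \<in> dom_Gcirc J0 J1 dD D) = u"
    using S dirichlet_sol_unique unfolding dirichlet_sol_def by blast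
  thus ?thesis unfolding DtN_def Let_def by simp
qed

lemma DtN_BD_part_neumann_sol:
  assumes q: "q \<in> BD_D J0 J1 dG G dD D" and N: "neumann_sol q u"
    and c: "c \<in> dom_Gc" "u - c \<in> BD_G J0 J1 dG G dD D"
  shows "DtN J0 J1 dG G dD D a m (u - c) = q"
proof -
  have qD: "q \<in> dD" using q BD_D_subset by blast
  have u: "u \<in> dG" using N by (simp add: neumann_sol_def)
  have fl: "a (G u) - q \<in> dom_Dc" "a (G u) \<in> dD" "D (a (G u)) = m u"
    using neumann_sol_flux[OF N qD] by auto
  have "dirichlet_sol (u - c) u" unfolding dirichlet_sol_def using u fl c dom_Gcirc_eq by simp
  thus ?thesis using DtN_eq_proj_flux c(2) BD_G_subset orth_proj_BD_D[OF fl(2) q fl(1)] by auto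
qed

lemma dirichlet_sol_neumann_sol:
  assumes q: "q \<in> BD_D J0 J1 dG G dD D" and u0: "u0 \<in> dG" and S: "dirichlet_sol u0 u"
    and DtN: "DtN J0 J1 dG G dD D a m u0 = q"
  shows "neumann_sol q u"
proof -
  have u: "u \<in> dG" "a (G u) \<in> dD" "m u = D (a (G u))"
    using S by (auto simp: dirichlet_sol_def)
  obtain c where c: "c \<in> dom_Dc" "a (G u) - c \<in> BD_D J0 J1 dG G dD D"
    using dom_D_decomp[OF u(2)] by blast
  have "a (G u) - c = q"
    using orth_proj_BD_D[OF u(2) c(2)] c(1) DtN_eq_proj_flux[OF u0 S] DtN by simp
  hence "a (G u) - q = c" by (simp add: algebra_simps)
  with c(1) show ?thesis using neumann_solI_flux[OF u] q BD_D_subset by blast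
qed

lemma DtN_inv_neumann_sol:
  assumes q: "q \<in> BD_D J0 J1 dG G dD D" and N: "neumann_sol q u"
  shows "DtN_inv J0 J1 dG G dD D a m q \<in> BD_G J0 J1 dG G dD D \<and> u - DtN_inv J0 J1 dG G dD D a m q \<in> dom_Gc"
proof -
  let ?BG = "BD_G J0 J1 dG G dD D" and ?f = "DtN J0 J1 dG G dD D a m"
  obtain c where c: "c \<in> dom_Gc" "u - c \<in> ?BG"
    using dom_G_decomp N by (auto simp: neumann_sol_def)
  hence "q \<in> ?f ` ?BG" using DtN_BD_part_neumann_sol[OF q N] by (metis image_eqI)
  hence w: "DtN_inv J0 J1 dG G dD D a m q \<in> ?BG" "?f (DtN_inv J0 J1 dG G dD D a m q) = q"
    unfolding DtN_inv_def by (auto intro: inv_into_into f_inv_into_f)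
  define u0 where "u0 = DtN_inv J0 J1 dG G dD D a m q"
  have u0: "u0 \<in> dG" using w BD_G_subset u0_def by blast
  obtain u' where S: "dirichlet_sol u0 u'" using dirichlet_sol_exists[OF u0] by blast
  have "u' = u"
    using neumann_sol_unique[OF dirichlet_sol_neumann_sol[OF q u0 S] N] w(2) u0_def by simp
  thus ?thesis using w S dom_Gcirc_eq u0_def by (auto simp: dirichlet_sol_def)
qed

lemma neumann_sol_bound:
  assumes N: "neumann_sol q u"
  shows "\<mu> * norm (u, G u) \<le> norm (D q, q)"
proof -
  have u: "u \<in> dG" using N by (simp add: neumann_sol_def)
  have "inner (M (u, G u)) (u, G u) = inner (D q, q) (u, G u)"
    using N u by (simp add: neumann_sol_def M_def)
  also have "\<dots> \<le> norm (D q, q) * norm (u, G u)" by (rule norm_cauchy_schwarz)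
  finally have "\<mu> * (norm (u, G u))^2 \<le> norm (D q, q) * norm (u, G u)" using M_coercive[of "(u, G u)"] by linarith
  thus ?thesis by (cases "norm (u, G u) = 0") (auto simp: power2_eq_square mult_le_cancel_right mult.assoc[symmetric])
qed

end

section \<open>The range of G and the compressed coefficient\<close>

context boundary_setting
begin

definition kerG :: "'a set" where "kerG = {x \<in> dG. G x = 0}"
definition WG :: "'a set" where "WG = {x \<in> dG. \<forall>k\<in>kerG. inner x k = 0}"
definition RG :: "'b set" where "RG = G ` dG"

lemma graph_limit:
  assumes x: "\<And>n. x n \<in> dG" and xa: "x \<longlonglongrightarrow> a" and gb: "(\<lambda>n. G (x n)) \<longlonglongrightarrow> b"
  shows "a \<in> dG \<and> b = G a"
proof -
  have "\<And>n. (x n, G (x n)) \<in> G.graph" using x by (simp add: G.graph_def)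
  from closed_sequentially[OF G.graph_closed this tendsto_Pair[OF xa gb]]
  show ?thesis by (auto simp: G.graph_def)
qed

lemma graph_bounded_convergent_subseq:
  assumes x: "\<And>n. x n \<in> dG" and bounded: "\<And>n. norm (x n) \<le> B" "\<And>n. norm (G (x n)) \<le> B'"
  shows "\<exists>l s. strict_mono (s::nat\<Rightarrow>nat) \<and> (x \<circ> s) \<longlonglongrightarrow> l"
proof -
  have "norm (x n, G (x n)) \<le> B + B'" for n
    using norm_Pair_le[of "x n" "G (x n)"] bounded[of n] by linarith
  hence "bounded ((\<lambda>x. (x, G x)) ` range x)" unfolding bounded_iff by blast
  moreover have "range x \<subseteq> dG" using x by auto
  ultimately have "compact (closure (range x))" using compact_emb by blast
  hence "seq_compact (closure (range x))" by (rule compact_imp_seq_compact)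
  moreover have "\<forall>n. x n \<in> closure (range x)" by (simp add: closure_def)
  ultimately obtain l s where "strict_mono s" "(x \<circ> s) \<longlonglongrightarrow> l" by (rule seq_compactE)
  thus ?thesis by blast
qed

lemma kerG_closed: "closed kerG"
proof (unfold closed_sequential_limits, intro allI impI, elim conjE)
  fix f l assume "\<forall>n. f n \<in> kerG" and "f \<longlonglongrightarrow> l"
  with graph_limit[of f l 0] show "l \<in> kerG" by (simp add: kerG_def)
qed

lemma subspace_kerG: "subspace kerG"
  unfolding subspace_def kerG_def using G.dm_0 G.T_0 G.dm_add G.T_add G.dm_scaleR G.T_scaleR by auto

lemma WG_dG: "x \<in> WG \<Longrightarrow> x \<in> dG" by (simp add: WG_def)

lemma WG_rep: assumes x: "x \<in> dG" shows "\<exists>w\<in>WG. G w = G x \<and> x - w \<in> kerG"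
proof -
  interpret K: closed_subspace kerG by (rule closed_subspace.intro[OF subspace_kerG kerG_closed])
  define p where "p = proj kerG x"
  have p: "p \<in> kerG" "p \<in> dG" "G p = 0" unfolding p_def using K.proj_in by (auto simp: kerG_def)
  have "x - p \<in> WG" unfolding WG_def using K.proj_orth[of _ x] p_def G.dm_diff[OF x p(2)] by auto
  moreover have "G (x - p) = G x" using G.T_diff[OF x p(2)] p by simp
  moreover have "x - (x - p) \<in> kerG" using p by simp
  ultimately show ?thesis by blast
qed

text \<open>Poincare inequality: a sequence in WG with norm 1 and G-norms tending to 0 has, by the
  compact embedding, a limit in ker G that is orthogonal to ker G, hence 0 -- contradicting norm 1.\<close>

lemma poincare_inequality: "\<exists>C>0. \<forall>x\<in>WG. norm x \<le> C * norm (G x)"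
proof (rule ccontr)
  assume "\<not> ?thesis"
  hence H: "\<forall>n::nat. \<exists>x\<in>WG. norm x > (real n + 1) * norm (G x)"
    by (metis not_le of_nat_0_le_iff add_nonneg_pos zero_less_one)
  then obtain x where xW: "\<And>n. x n \<in> WG" and xb: "\<And>n. norm (x n) > (real n + 1) * norm (G (x n))" by metis
  have xn0: "x n \<noteq> 0" for n using xb[of n] by (cases "x n = 0") (auto simp: G.T_0)
  define y where "y n = (1 / norm (x n)) *\<^sub>R x n" for n
  have yW: "y n \<in> WG" for n using xW G.dm_scaleR by (simp add: y_def WG_def)
  have yd: "y n \<in> dG" for n using yW WG_dG by blast
  have ny: "norm (y n) = 1" for n using xn0 by (simp add: y_def)
  have Gy: "norm (G (y n)) < 1 / (real n + 1)" for n
  proof -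
    have "G (y n) = (1 / norm (x n)) *\<^sub>R G (x n)" using G.T_scaleR WG_dG[OF xW] y_def by simp
    hence "norm (G (y n)) = norm (G (x n)) / norm (x n)" by simp
    also have "\<dots> < 1 / (real n + 1)" using xb[of n] xn0 by (simp add: divide_less_eq field_simps)
    finally show ?thesis .
  qed
  have "norm (G (y n)) \<le> 1" for n
  proof -
    have "1 / (real n + 1) \<le> 1" by simp
    with Gy[of n] show ?thesis by linarith
  qed
  then obtain l r where r: "strict_mono r" and lim: "(y \<circ> r) \<longlonglongrightarrow> l"
    using graph_bounded_convergent_subseq[of y 1 1] yd ny by fastforce
  have G0: "(\<lambda>k. G (y (r k))) \<longlonglongrightarrow> 0"
  proof -
    have l0: "(\<lambda>k. 1 / (real (r k) + 1)) \<longlonglongrightarrow> 0"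
      using LIMSEQ_subseq_LIMSEQ[OF LIMSEQ_inverse_real_of_nat r]
      by (simp add: o_def inverse_eq_divide add.commute)
    have "\<forall>k. norm (G (y (r k))) \<le> 1 / (real (r k) + 1)" using Gy less_imp_le by blast
    from Lim_null_comparison[OF always_eventually[OF this] l0] show ?thesis .
  qed
  have lim': "(\<lambda>k. y (r k)) \<longlonglongrightarrow> l" using lim by (simp add: o_def)
  from graph_limit[of "\<lambda>k. y (r k)", OF yd lim' G0] have lK: "l \<in> kerG" by (simp add: kerG_def)
  have "(\<lambda>k. inner (y (r k)) l) \<longlonglongrightarrow> inner l l" using lim by (simp add: o_def tendsto_intros)
  moreover have "inner (y (r k)) l = 0" for k using yW lK by (simp add: WG_def)
  ultimately have "inner l l = 0" by (simp add: LIMSEQ_const_iff)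
  hence "l = 0" by simp
  moreover have "(\<lambda>k. norm (y (r k))) \<longlonglongrightarrow> norm l" using lim by (simp add: o_def tendsto_intros)
  ultimately show False using ny by (simp add: LIMSEQ_const_iff)
qed

lemma RG_rep: "z \<in> RG \<Longrightarrow> \<exists>w\<in>WG. G w = z"
  using WG_rep unfolding RG_def by blast

lemma RG_eq_snd_graph: "RG = snd ` G.graph"
  unfolding RG_def G.graph_def by (simp add: image_image)

lemma RG_J: assumes "z \<in> RG" shows "J1 z \<in> RG"
proof -
  obtain x where x: "x \<in> dG" "z = G x" using assms unfolding RG_def by blast
  have "J1 z = G (J0 x)" using G.T_J[OF x(1)] x(2) by simp
  thus ?thesis using G.dm_J[OF x(1)] unfolding RG_def by blast
qed

text \<open>ran G is closed: by the Poincare inequality the projection (x, G x) \<mapsto> G x is bounded below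
  on the closed graph of G restricted to WG.\<close>

lemma closed_subspace_RG: "closed_subspace RG"
proof
  show "subspace RG"
    unfolding RG_eq_snd_graph by (rule linear_subspace_image[OF linear_snd G.graph_subspace])
  obtain C where C: "C > 0" "\<forall>x\<in>WG. norm x \<le> C * norm (G x)" using poincare_inequality by blast
  define S where "S = G.graph \<inter> (\<Inter>k\<in>kerG. {p. inner (fst p) k = 0})"
  have S: "S = (\<lambda>x. (x, G x)) ` WG" unfolding S_def G.graph_def WG_def by auto
  have subS: "subspace S"
    unfolding S by (rule G.subspace_graph_image[OF subsetI[OF WG_dG]])
      (auto simp: subspace_def WG_def G.dm_0 G.dm_add G.dm_scaleR inner_add_left)
  have clS: "closed S"
    unfolding S_def by (intro closed_Int G.graph_closed closed_INT ballI closed_Collect_eq continuous_intros)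
  have below: "(1 / (C + 1)) * norm p \<le> norm (snd p)" if "p \<in> S" for p
  proof -
    obtain x where x: "x \<in> WG" "p = (x, G x)" using \<open>p \<in> S\<close> S by auto
    have "norm p \<le> norm x + norm (G x)" using x(2) norm_Pair_le by simp
    also have "\<dots> \<le> (C + 1) * norm (G x)" using C x(1) by (simp add: algebra_simps)
    finally show ?thesis using C x(2) by (simp add: field_simps)
  qed
  have "closed (snd ` S)"
    by (rule closed_image_bounded_below[OF subS clS bounded_linear_snd _ below]) (use C in simp)
  moreover have "snd ` S = RG"
  proof
    show "snd ` S \<subseteq> RG" unfolding S RG_def using WG_dG by auto
    show "RG \<subseteq> snd ` S" unfolding S using RG_rep by (auto simp: image_image)
  qed
  ultimately show "closed RG" by simp
qed

sublocale RG: closed_subspace RG by (rule closed_subspace_RG)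

end

context dtn_problem
begin

lemma compress_eq_proj: "compress J1 RG a x = proj RG (a x)"
  unfolding compress_def
proof (rule G.K.orth_proj_cinner)
  show "\<And>a b. a \<in> RG \<Longrightarrow> b \<in> RG \<Longrightarrow> a - b \<in> RG" by (rule subspace_diff[OF RG.subspace])
  show "proj RG (a x) \<in> RG" by (rule RG.proj_in)
  show "\<forall>s\<in>RG. cinner J1 (a x - proj RG (a x)) s = 0"
    using RG_J RG.proj_orth by (simp add: G.K.cinner_eq_0_iff)
qed

lemma compress_coercive: "x \<in> RG \<Longrightarrow> \<mu> * (norm x)^2 \<le> inner (compress J1 RG a x) x"
  using a_coercive[of x] RG.inner_proj_left[of x "a x"] compress_eq_proj by simp

lemma compress_surj: assumes y: "y \<in> RG" shows "\<exists>x\<in>RG. compress J1 RG a x = y"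
proof -
  obtain x where x: "x \<in> RG" "\<forall>v\<in>RG. inner (a x) v = inner y v"
    using lax_milgram[OF RG.subspace RG.closed a_bounded_linear mu] a_coercive by blast
  have "proj RG (a x) = y" by (rule RG.proj_unique[OF y]) (use x in \<open>simp add: inner_diff_left\<close>)
  thus ?thesis using x compress_eq_proj by auto
qed

lemma compress_inj: "inj_on (compress J1 RG a) RG"
proof (rule inj_onI)
  fix x y assume x: "x \<in> RG" and y: "y \<in> RG" and e: "compress J1 RG a x = compress J1 RG a y"
  have w: "x - y \<in> RG" using x y subspace_diff[OF RG.subspace] by blast
  have "compress J1 RG a (x - y) = 0"
    using e unfolding compress_eq_proj by (simp add: a_diff RG.linear_proj linear_diff)
  hence "\<mu> * (norm (x - y))^2 \<le> 0" using compress_coercive[OF w] by simp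
  thus "x = y" using mu by (simp add: mult_le_0_iff)
qed

lemma compress_inv_in: "y \<in> RG \<Longrightarrow> compress_inv J1 RG a y \<in> RG"
  and compress_compress_inv: "y \<in> RG \<Longrightarrow> compress J1 RG a (compress_inv J1 RG a y) = y"
  using compress_surj unfolding compress_inv_def by (blast intro: inv_into_into f_inv_into_f)+

lemma compress_inv_compress: "x \<in> RG \<Longrightarrow> compress_inv J1 RG a (compress J1 RG a x) = x"
  unfolding compress_inv_def by (rule inv_into_f_f[OF compress_inj])

lemma norm_compress_inv_le: assumes y: "y \<in> RG" shows "\<mu> * norm (compress_inv J1 RG a y) \<le> norm y"
proof -
  define x where "x = compress_inv J1 RG a y"
  have x: "x \<in> RG" "compress J1 RG a x = y"
    using compress_inv_in[OF y] compress_compress_inv[OF y] x_def by auto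
  have "\<mu> * (norm x)^2 \<le> inner y x" using compress_coercive[OF x(1)] x(2) by simp
  also have "\<dots> \<le> norm y * norm x" by (rule norm_cauchy_schwarz)
  finally have "\<mu> * norm x * norm x \<le> norm y * norm x" by (simp add: power2_eq_square mult.assoc)
  thus ?thesis by (cases "norm x = 0") (auto simp: mult_le_cancel_right x_def)
qed

end

section \<open>Convergence of the inverse Dirichlet-to-Neumann operators\<close>

locale dtn_convergence = boundary_setting J0 J1 dG G dD D
  for J0 :: "'a::{real_inner,complete_space} \<Rightarrow> 'a" and J1 :: "'b::{real_inner,complete_space} \<Rightarrow> 'b"
  and dG G dD D +
  fixes mm :: "nat \<Rightarrow> 'a \<Rightarrow> 'a" and m :: "'a \<Rightarrow> 'a"
    and aa :: "nat \<Rightarrow> 'b \<Rightarrow> 'b" and a :: "'b \<Rightarrow> 'b"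
    and \<mu> :: real and qq :: "nat \<Rightarrow> 'b" and q :: 'b
  assumes mm_L: "\<forall>n. bounded_clinear_op J0 (mm n)" and m_L: "bounded_clinear_op J0 m"
    and aa_L: "\<forall>n. bounded_clinear_op J1 (aa n)" and a_L: "bounded_clinear_op J1 a"
    and mu_pos: "\<mu> > 0"
    and mm_re_ge: "\<forall>n. re_ge J0 (mm n) \<mu>" and m_re_ge: "re_ge J0 m \<mu>"
    and aa_re_ge: "\<forall>n. re_ge J1 (aa n) \<mu>" and a_re_ge: "re_ge J1 a \<mu>"
    and m_wot: "\<forall>x y. (\<lambda>n. cinner J0 (mm n x) y) \<longlonglongrightarrow> cinner J0 (m x) y"
    and a_wot: "\<forall>x \<in> G ` dG. \<forall>y \<in> G ` dG.
                  (\<lambda>n. cinner J1 (compress_inv J1 (G ` dG) (aa n) x) y)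
                    \<longlonglongrightarrow> cinner J1 (compress_inv J1 (G ` dG) a x) y"
    and qq_BD: "\<forall>n. qq n \<in> BD_D J0 J1 dG G dD D" and q_BD: "q \<in> BD_D J0 J1 dG G dD D"
    and qq_lim: "(\<lambda>n. (qq n, D (qq n))) \<longlonglongrightarrow> (q, D q)"
begin

lemma dtn_problem_lim: "dtn_problem J0 J1 dG G dD D a m \<mu>"
  by (intro dtn_problem.intro boundary_setting_axioms dtn_problem_axioms.intro a_L m_L mu_pos a_re_ge m_re_ge)

lemma dtn_problem_seq: "dtn_problem J0 J1 dG G dD D (aa n) (mm n) \<mu>"
  using mm_L aa_L mm_re_ge aa_re_ge
  by (intro dtn_problem.intro boundary_setting_axioms dtn_problem_axioms.intro mu_pos) auto

lemma mm_bounded_linear: "bounded_linear (mm n)" using mm_L by (simp add: bounded_clinear_op_def)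
lemma aa_bounded_linear: "bounded_linear (aa n)" using aa_L by (simp add: bounded_clinear_op_def)
lemma mm_coercive: "\<mu> * (norm x)^2 \<le> inner (mm n x) x"
  using re_ge_imp_inner[OF G.J.cstruct_axioms] mm_re_ge by blast
lemma aa_coercive: "\<mu> * (norm x)^2 \<le> inner (aa n x) x"
  using re_ge_imp_inner[OF G.K.cstruct_axioms] aa_re_ge by blast

lemma inner_mm_tendsto: "(\<lambda>n. inner (mm n x) y) \<longlonglongrightarrow> inner (m x) y"
  using tendsto_Re[OF m_wot[rule_format, of x y]] by simp

lemma mm_uniformly_bounded: "\<exists>Mb\<ge>0. \<forall>n x. norm (mm n x) \<le> Mb * norm x"
  by (rule weakly_convergent_operators_uniformly_bounded[OF mm_bounded_linear inner_mm_tendsto])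

text \<open>uL and un n are the Neumann solutions of the limit and of the n-th problem. y0 is the
  compression of a G uL to ran G, and xn n solves the compressed problem for aa n with datum y0, so
  that aa n (xn n) and a (G uL) have the same component in ran G. wn n and up lift xn n and G uL
  into WG, and ut n = uL + (wn n - up) is a corrector with G (ut n) = xn n.\<close>

definition uL :: "'a" where "uL = (SOME u. dtn_problem.neumann_sol dG G D a m q u)"
definition un :: "nat \<Rightarrow> 'a" where "un n = (SOME u. dtn_problem.neumann_sol dG G D (aa n) (mm n) (qq n) u)"

lemma uL_sol: "dtn_problem.neumann_sol dG G D a m q uL"
  unfolding uL_def by (rule someI_ex[OF dtn_problem.neumann_sol_exists[OF dtn_problem_lim]])
lemma un_sol: "dtn_problem.neumann_sol dG G D (aa n) (mm n) (qq n) (un n)"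
  unfolding un_def by (rule someI_ex[OF dtn_problem.neumann_sol_exists[OF dtn_problem_seq]])

lemma uL_dG: "uL \<in> dG" using uL_sol dtn_problem.neumann_sol_def[OF dtn_problem_lim] by blast
lemma un_dG: "un n \<in> dG" using un_sol dtn_problem.neumann_sol_def[OF dtn_problem_seq] by blast
lemma uL_eq: "v \<in> dG \<Longrightarrow> inner (m uL) v + inner (a (G uL)) (G v) = inner (D q) v + inner q (G v)"
  using uL_sol dtn_problem.neumann_sol_def[OF dtn_problem_lim] by blast
lemma un_eq: "v \<in> dG \<Longrightarrow>
    inner (mm n (un n)) v + inner (aa n (G (un n))) (G v) = inner (D (qq n)) v + inner (qq n) (G v)"
  using un_sol dtn_problem.neumann_sol_def[OF dtn_problem_seq] by blast

lemma un_bounded: "\<exists>B. \<forall>n. norm (un n, G (un n)) \<le> B"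
proof -
  obtain Bq where "\<forall>n. norm (qq n, D (qq n)) \<le> Bq"
    using convergent_imp_Bseq[OF convergentI[OF qq_lim]] by (auto simp: Bseq_def)
  moreover have "\<mu> * norm (un n, G (un n)) \<le> norm (qq n, D (qq n))" for n
    using dtn_problem.neumann_sol_bound[OF dtn_problem_seq un_sol, of n]
    by (simp add: norm_Pair add.commute)
  ultimately have "\<mu> * norm (un n, G (un n)) \<le> Bq" for n by (meson order_trans)
  hence "norm (un n, G (un n)) \<le> Bq / \<mu>" for n using mu_pos by (simp add: field_simps)
  thus ?thesis by blast
qed

definition y0 :: "'b" where "y0 = compress J1 RG a (G uL)"
definition xn :: "nat \<Rightarrow> 'b" where "xn n = compress_inv J1 RG (aa n) y0"

lemma G_in_RG: "x \<in> dG \<Longrightarrow> G x \<in> RG" by (simp add: RG_def)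

lemma y0_RG: "y0 \<in> RG"
  unfolding y0_def dtn_problem.compress_eq_proj[OF dtn_problem_lim] by (rule RG.proj_in)

lemma inner_y0: "v \<in> dG \<Longrightarrow> inner (a (G uL)) (G v) = inner y0 (G v)"
  unfolding y0_def dtn_problem.compress_eq_proj[OF dtn_problem_lim]
  using RG.inner_proj_left[OF G_in_RG] by simp

lemma xn_RG: "xn n \<in> RG"
  unfolding xn_def by (rule dtn_problem.compress_inv_in[OF dtn_problem_seq y0_RG])

lemma xn_bounded: "\<mu> * norm (xn n) \<le> norm y0"
  unfolding xn_def by (rule dtn_problem.norm_compress_inv_le[OF dtn_problem_seq y0_RG])

lemma inner_aa_xn: "v \<in> dG \<Longrightarrow> inner (aa n (xn n)) (G v) = inner y0 (G v)"
  using dtn_problem.compress_compress_inv[OF dtn_problem_seq y0_RG, of n]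
    dtn_problem.compress_eq_proj[OF dtn_problem_seq] RG.inner_proj_left[OF G_in_RG]
  by (metis xn_def)

lemma xn_weakly_tendsto: "(\<lambda>n. inner (xn n) z) \<longlonglongrightarrow> inner (G uL) z"
proof -
  have G_uL: "compress_inv J1 RG a y0 = G uL"
    unfolding y0_def by (rule dtn_problem.compress_inv_compress[OF dtn_problem_lim G_in_RG[OF uL_dG]])
  have "(\<lambda>n. inner (xn n) (proj RG z)) \<longlonglongrightarrow> inner (G uL) (proj RG z)"
    using tendsto_Re[OF a_wot[folded RG_def, rule_format, OF y0_RG RG.proj_in]]
    by (simp add: xn_def G_uL)
  moreover have "inner w z = inner w (proj RG z)" if "w \<in> RG" for w
    using RG.inner_proj_left[OF that, of z] by (simp add: inner_commute)
  ultimately show ?thesis using xn_RG G_in_RG[OF uL_dG] by simp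
qed

definition wn :: "nat \<Rightarrow> 'a" where "wn n = (SOME w. w \<in> WG \<and> G w = xn n)"
definition up :: "'a" where "up = (SOME w. w \<in> WG \<and> G w = G uL \<and> uL - w \<in> kerG)"

lemma wn: "wn n \<in> WG \<and> G (wn n) = xn n"
  unfolding wn_def by (rule someI_ex) (use RG_rep[OF xn_RG] in blast)
lemma up: "up \<in> WG \<and> G up = G uL \<and> uL - up \<in> kerG"
  unfolding up_def by (rule someI_ex) (use WG_rep[OF uL_dG] in blast)

lemma wn_dG: "wn n \<in> dG" using wn WG_dG by blast
lemma up_dG: "up \<in> dG" using up WG_dG by blast

lemma wn_bounded: "\<exists>B. \<forall>n. norm (wn n) \<le> B \<and> norm (G (wn n)) \<le> B"
proof -
  obtain C where C: "C > 0" "\<forall>x\<in>WG. norm x \<le> C * norm (G x)" using poincare_inequality by blast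
  have x: "norm (G (wn n)) \<le> norm y0 / \<mu>" for n
    using xn_bounded[of n] wn mu_pos by (simp add: field_simps)
  have "norm (wn n) \<le> C * (norm y0 / \<mu>)" for n
    using C wn[of n] x[of n] by (meson mult_left_mono less_imp_le order_trans)
  thus ?thesis using x by (meson max.cobounded1 max.cobounded2 order_trans)
qed

text \<open>Every subsequence of wn has, by compactness, a convergent subsequence; its limit l lies in
  WG, and G l = G up because G (wn n) = xn n tends weakly to G uL; hence l = up.\<close>

lemma wn_tendsto: "wn \<longlonglongrightarrow> up"
proof (rule LIMSEQ_subsequence_criterion)
  fix r :: "nat \<Rightarrow> nat" assume r: "strict_mono r"
  obtain B where B: "\<forall>n. norm (wn n) \<le> B \<and> norm (G (wn n)) \<le> B" using wn_bounded by blast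
  obtain l s where s: "strict_mono (s::nat\<Rightarrow>nat)" and lim: "((wn \<circ> r) \<circ> s) \<longlonglongrightarrow> l"
    using graph_bounded_convergent_subseq[of "wn \<circ> r" B B] wn_dG B by auto
  have lim': "(\<lambda>k. wn (r (s k))) \<longlonglongrightarrow> l" using lim by (simp add: o_def)
  have rs: "strict_mono (r \<circ> s)" using r s by (rule strict_mono_o)
  have "inner (l - up) z = inner 0 \<psi>" if rad: "G.adj_rel \<psi> z" for \<psi> z
  proof -
    have "(\<lambda>k. inner (xn (r (s k))) \<psi>) \<longlonglongrightarrow> inner (G uL) \<psi>"
      using LIMSEQ_subseq_LIMSEQ[OF xn_weakly_tendsto rs] by (simp add: o_def)
    moreover have "inner (xn k) \<psi> = inner (wn k) z" for k
      using rad wn_dG[of k] wn[of k] by (auto simp: G.adj_rel_def)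
    ultimately have "(\<lambda>k. inner (wn (r (s k))) z) \<longlonglongrightarrow> inner (G uL) \<psi>" by simp
    moreover have "(\<lambda>k. inner (wn (r (s k))) z) \<longlonglongrightarrow> inner l z" using lim' by (intro tendsto_intros)
    ultimately have "inner l z = inner (G up) \<psi>" using LIMSEQ_unique up by metis
    also have "\<dots> = inner up z" using rad up_dG by (simp add: G.adj_rel_def)
    finally show ?thesis by (simp add: inner_diff_left)
  qed
  from G.closed_graph_double_adjoint[OF this] have lk: "l - up \<in> kerG" by (simp add: kerG_def)
  have "inner l k = 0" if k: "k \<in> kerG" for k
  proof -
    have "(\<lambda>n. inner (wn (r (s n))) k) \<longlonglongrightarrow> inner l k" using lim' by (intro tendsto_intros)
    moreover have "inner (wn (r (s n))) k = 0" for n using wn k by (simp add: WG_def)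
    ultimately show ?thesis by (simp add: LIMSEQ_const_iff)
  qed
  moreover have "inner up k = 0" if "k \<in> kerG" for k using up that by (simp add: WG_def)
  ultimately have "inner (l - up) (l - up) = 0" using lk by (simp add: inner_diff_left)
  thus "\<exists>s. strict_mono s \<and> (wn \<circ> r \<circ> s) \<longlonglongrightarrow> up" using s lim by auto
qed

definition ut :: "nat \<Rightarrow> 'a" where "ut n = uL + (wn n - up)"
definition dn :: "nat \<Rightarrow> 'a" where "dn n = un n - ut n"

lemma ut_dG: "ut n \<in> dG" unfolding ut_def using uL_dG wn_dG up_dG G.dm_add G.dm_diff by simp
lemma G_ut: "G (ut n) = xn n"
  unfolding ut_def using uL_dG wn_dG up_dG G.dm_diff G.T_add G.T_diff wn up by simp
lemma ut_minus_uL_tendsto: "(\<lambda>n. ut n - uL) \<longlonglongrightarrow> 0"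
  using tendsto_diff[OF wn_tendsto tendsto_const[of up]] by (simp add: ut_def)
lemma dn_dG: "dn n \<in> dG" unfolding dn_def using un_dG ut_dG G.dm_diff by simp
lemma G_dn: "G (dn n) = G (un n) - xn n" unfolding dn_def using un_dG ut_dG G.T_diff G_ut by simp

text \<open>The aa n-terms cancel exactly because G (ut n) = xn n.\<close>

lemma dn_eq:
  assumes v: "v \<in> dG"
  shows "inner (mm n (dn n)) v + inner (aa n (G (dn n))) (G v)
       = inner (D (qq n) - D q) v + inner (qq n - q) (G v) - inner (mm n (ut n - uL)) v
         - inner (mm n uL - m uL) v"
proof -
  have "dn n = un n - (ut n - uL) - uL" by (simp add: dn_def)
  hence A: "inner (mm n (dn n)) v = inner (mm n (un n)) v - inner (mm n (ut n - uL)) v - inner (mm n uL) v"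
    by (simp add: linear_diff[OF bounded_linear.linear[OF mm_bounded_linear]] inner_diff_left)
  have B: "inner (aa n (G (dn n))) (G v) = inner (aa n (G (un n))) (G v) - inner (a (G uL)) (G v)"
    unfolding G_dn using inner_aa_xn[OF v] inner_y0[OF v]
    by (simp add: linear_diff[OF bounded_linear.linear[OF aa_bounded_linear]] inner_diff_left)
  show ?thesis using A B un_eq[OF v, of n] uL_eq[OF v] by (simp add: inner_diff_left)
qed

lemma dn_bounded: "\<exists>B\<ge>0. \<forall>n. norm (dn n, G (dn n)) \<le> B"
proof -
  obtain B1 where B1: "\<forall>n. norm (un n, G (un n)) \<le> B1" using un_bounded by blast
  obtain B2 where B2: "\<forall>n. norm (wn n) \<le> B2 \<and> norm (G (wn n)) \<le> B2" using wn_bounded by blast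
  have "norm (dn n, G (dn n)) \<le> B1 + (norm uL + B2 + norm up + B2)" for n
  proof -
    have "(dn n, G (dn n)) = (un n, G (un n)) - (ut n, G (ut n))" using G_dn G_ut by (simp add: dn_def)
    hence "norm (dn n, G (dn n)) \<le> norm (un n, G (un n)) + norm (ut n, G (ut n))"
      by (simp only: norm_triangle_ineq4)
    moreover have "norm (ut n, G (ut n)) \<le> norm (ut n) + norm (G (wn n))"
      using norm_Pair_le[of "ut n" "G (ut n)"] G_ut wn by simp
    moreover have "norm (ut n) \<le> norm uL + norm (wn n - up)" unfolding ut_def by (rule norm_triangle_ineq)
    moreover have "norm (wn n - up) \<le> norm (wn n) + norm up" by (rule norm_triangle_ineq4)
    ultimately show ?thesis using B1[rule_format, of n] B2[rule_format, of n] by linarith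
  qed
  moreover have "0 \<le> B1" "0 \<le> B2"
    using B1[rule_format, of 0] B2[rule_format, of 0] norm_ge_zero[of "(un 0, G (un 0))"]
      norm_ge_zero[of "wn 0"] by linarith+
  ultimately show ?thesis by (intro exI[of _ "B1 + (norm uL + B2 + norm up + B2)"]) simp
qed

text \<open>The cross term: mm n uL - m uL tends to 0 only weakly, so strong convergence of a
  subsequence of dn (compact embedding) is needed to pass to the limit.\<close>

lemma cross_term_tendsto_0: "(\<lambda>n. inner (mm n uL - m uL) (dn n)) \<longlonglongrightarrow> 0"
proof (rule LIMSEQ_subsequence_criterion)
  fix r :: "nat \<Rightarrow> nat" assume r: "strict_mono r"
  obtain B where B: "\<And>n. norm (dn n, G (dn n)) \<le> B" using dn_bounded by blast
  have "norm (dn n) \<le> B" "norm (G (dn n)) \<le> B" for n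
    using B[of n] norm_fst_le norm_snd_le order_trans by fastforce+
  then obtain l s where s: "strict_mono (s::nat\<Rightarrow>nat)" and lim: "((dn \<circ> r) \<circ> s) \<longlonglongrightarrow> l"
    using graph_bounded_convergent_subseq[of "dn \<circ> r" B B] dn_dG by auto
  have rs: "strict_mono (r \<circ> s)" using r s by (rule strict_mono_o)
  obtain Mb where "Mb \<ge> 0" and Mb: "\<And>n x. norm (mm n x) \<le> Mb * norm x"
    using mm_uniformly_bounded by blast
  let ?k = "\<lambda>k. r (s k)"
  have c1: "(\<lambda>k. inner (mm (?k k) uL - m uL) l) \<longlonglongrightarrow> 0"
    using tendsto_diff[OF LIMSEQ_subseq_LIMSEQ[OF inner_mm_tendsto[of uL l] rs] tendsto_const[of "inner (m uL) l"]]
    by (simp add: o_def inner_diff_left)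
  let ?Bm = "Mb * norm uL + norm (m uL)"
  have bound: "norm (inner (mm (?k k) uL - m uL) (dn (?k k) - l)) \<le> ?Bm * norm (dn (?k k) - l)" for k
  proof -
    have "norm (mm (?k k) uL - m uL) \<le> ?Bm"
      using Mb[of "?k k" uL] norm_triangle_ineq4[of "mm (?k k) uL" "m uL"] by linarith
    have "norm (inner (mm (?k k) uL - m uL) (dn (?k k) - l))
        \<le> norm (mm (?k k) uL - m uL) * norm (dn (?k k) - l)"
      by (simp add: Cauchy_Schwarz_ineq2)
    also have "\<dots> \<le> ?Bm * norm (dn (?k k) - l)" by (rule mult_right_mono) (fact, simp)
    finally show ?thesis .
  qed
  have "(\<lambda>k. dn (?k k) - l) \<longlonglongrightarrow> 0" using lim by (simp add: o_def LIM_zero)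
  hence "(\<lambda>k. ?Bm * norm (dn (?k k) - l)) \<longlonglongrightarrow> 0"
    by (intro tendsto_mult_right_zero tendsto_norm_zero)
  with always_eventually[OF allI[OF bound]]
  have c2: "(\<lambda>k. inner (mm (?k k) uL - m uL) (dn (?k k) - l)) \<longlonglongrightarrow> 0"
    by (rule Lim_null_comparison)
  have "(\<lambda>k. inner (mm (?k k) uL - m uL) (dn (?k k))) \<longlonglongrightarrow> 0"
    using tendsto_add_zero[OF c1 c2] by (simp add: inner_diff_right)
  thus "\<exists>s. strict_mono s \<and> ((\<lambda>n. inner (mm n uL - m uL) (dn n)) \<circ> r \<circ> s) \<longlonglongrightarrow> 0"
    using s by (intro exI[of _ s]) (simp add: o_def)
qed

lemma dn_energy_estimate:
  assumes B: "\<And>n. norm (dn n, G (dn n)) \<le> B"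
    and Mb: "Mb \<ge> 0" "\<And>n x. norm (mm n x) \<le> Mb * norm x"
  shows "\<mu> * (norm (dn n, G (dn n)))^2
    \<le> norm (D (qq n) - D q, qq n - q) * B + Mb * norm (ut n - uL) * B
       + \<bar>inner (mm n uL - m uL) (dn n)\<bar>"
proof -
  have "\<mu> * (norm (dn n, G (dn n)))^2 = \<mu> * (norm (dn n))^2 + \<mu> * (norm (G (dn n)))^2"
    by (simp add: norm_Pair algebra_simps)
  also have "\<dots> \<le> inner (mm n (dn n)) (dn n) + inner (aa n (G (dn n))) (G (dn n))"
    using mm_coercive aa_coercive by (rule add_mono)
  also have "\<dots> = inner (D (qq n) - D q, qq n - q) (dn n, G (dn n))
      - inner (mm n (ut n - uL)) (dn n) - inner (mm n uL - m uL) (dn n)"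
    using dn_eq[OF dn_dG, of n n] by simp
  also have "\<dots> \<le> norm (D (qq n) - D q, qq n - q) * B + Mb * norm (ut n - uL) * B
       + \<bar>inner (mm n uL - m uL) (dn n)\<bar>"
  proof -
    have "inner (D (qq n) - D q, qq n - q) (dn n, G (dn n))
        \<le> norm (D (qq n) - D q, qq n - q) * norm (dn n, G (dn n))" by (rule norm_cauchy_schwarz)
    also have "\<dots> \<le> norm (D (qq n) - D q, qq n - q) * B" using B by (simp add: mult_left_mono)
    finally have 1: "inner (D (qq n) - D q, qq n - q) (dn n, G (dn n))
        \<le> norm (D (qq n) - D q, qq n - q) * B" .
    have "- inner (mm n (ut n - uL)) (dn n) \<le> norm (mm n (ut n - uL)) * norm (dn n)"
      using Cauchy_Schwarz_ineq2[of "mm n (ut n - uL)" "dn n"] by linarith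
    also have "\<dots> \<le> (Mb * norm (ut n - uL)) * B"
      using Mb B norm_fst_le[of "dn n" "G (dn n)"] by (intro mult_mono) (auto intro: order_trans)
    finally show ?thesis using 1 by linarith
  qed
  finally show ?thesis .
qed

lemma dn_tendsto_0: "(\<lambda>n. (dn n, G (dn n))) \<longlonglongrightarrow> 0"
proof -
  obtain B where B: "B \<ge> 0" "\<And>n. norm (dn n, G (dn n)) \<le> B" using dn_bounded by blast
  obtain Mb where Mb: "Mb \<ge> 0" "\<And>n x. norm (mm n x) \<le> Mb * norm x"
    using mm_uniformly_bounded by blast
  define h where "h n = norm (D (qq n) - D q, qq n - q) * B + Mb * norm (ut n - uL) * B
       + \<bar>inner (mm n uL - m uL) (dn n)\<bar>" for n
  have "norm (D (qq n) - D q, qq n - q) = norm ((qq n, D (qq n)) - (q, D q))" for n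
    by (simp add: norm_Pair add.commute)
  hence e: "(\<lambda>n. norm (D (qq n) - D q, qq n - q)) \<longlonglongrightarrow> 0"
    using tendsto_norm_zero[OF LIM_zero[OF qq_lim]] by simp
  have "h \<longlonglongrightarrow> 0 * B + Mb * 0 * B + 0"
    unfolding h_def
    using tendsto_add[OF tendsto_add[OF tendsto_mult[OF e tendsto_const]
          tendsto_mult[OF tendsto_mult[OF tendsto_const tendsto_norm_zero[OF ut_minus_uL_tendsto]]
            tendsto_const]]
        tendsto_rabs_zero[OF cross_term_tendsto_0]] .
  hence hlim: "(\<lambda>n. h n / \<mu>) \<longlonglongrightarrow> 0" using tendsto_divide[OF _ tendsto_const[of \<mu>]] mu_pos by force
  have upper: "\<forall>n. (norm (dn n, G (dn n)))^2 \<le> h n / \<mu>"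
  proof
    fix n
    have "\<mu> * (norm (dn n, G (dn n)))^2 \<le> h n"
      unfolding h_def by (rule dn_energy_estimate[OF B(2) Mb])
    thus "(norm (dn n, G (dn n)))^2 \<le> h n / \<mu>" using mu_pos by (simp add: pos_le_divide_eq mult.commute)
  qed
  have lower: "\<forall>n. 0 \<le> (norm (dn n, G (dn n)))^2" by simp
  have "(\<lambda>n. (norm (dn n, G (dn n)))^2) \<longlonglongrightarrow> 0"
    by (rule tendsto_sandwich[OF always_eventually[OF lower] always_eventually[OF upper] tendsto_const hlim])
  hence "(\<lambda>n. sqrt ((norm (dn n, G (dn n)))^2)) \<longlonglongrightarrow> sqrt 0" by (rule tendsto_real_sqrt)
  hence "(\<lambda>n. norm (dn n, G (dn n))) \<longlonglongrightarrow> 0" by simp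
  thus ?thesis by (rule tendsto_norm_zero_cancel)
qed

lemma un_graph_weakly_tendsto:
  assumes v: "v \<in> dG"
  shows "(\<lambda>n. inner (un n) v + inner (G (un n)) (G v)) \<longlonglongrightarrow> inner uL v + inner (G uL) (G v)"
proof -
  have "inner (un n) v + inner (G (un n)) (G v)
     = inner uL v + inner (ut n - uL) v + inner (xn n) (G v) + inner (dn n, G (dn n)) (v, G v)" for n
  proof -
    have "un n = uL + (ut n - uL) + dn n" by (simp add: dn_def)
    hence "inner (un n) v = inner uL v + inner (ut n - uL) v + inner (dn n) v"
      by (metis inner_add_left)
    moreover have "inner (G (un n)) (G v) = inner (xn n) (G v) + inner (G (dn n)) (G v)"
      using G_dn by (simp add: inner_diff_left)
    ultimately show ?thesis by simp
  qed
  moreover have "(\<lambda>n. inner uL v + inner (ut n - uL) v + inner (xn n) (G v) + inner (dn n, G (dn n)) (v, G v))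
      \<longlonglongrightarrow> inner uL v + inner 0 v + inner (G uL) (G v) + inner 0 (v, G v)"
    by (intro tendsto_add tendsto_const xn_weakly_tendsto tendsto_inner[OF ut_minus_uL_tendsto tendsto_const]
        tendsto_inner[OF dn_tendsto_0 tendsto_const])
  ultimately show ?thesis by simp
qed

lemma graph_inner_DtN_inv_eq:
  assumes "dtn_problem J0 J1 dG G dD D a' m' \<mu>" and "q' \<in> BD_D J0 J1 dG G dD D"
    and N: "dtn_problem.neumann_sol dG G D a' m' q' u" and v: "v \<in> BD_G J0 J1 dG G dD D"
  shows "graph_inner J0 J1 G (DtN_inv J0 J1 dG G dD D a' m' q') v = graph_inner J0 J1 G u v"
proof -
  let ?w = "DtN_inv J0 J1 dG G dD D a' m' q'"
  have w: "?w \<in> BD_G J0 J1 dG G dD D" "u - ?w \<in> dom_Gc"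
    using dtn_problem.DtN_inv_neumann_sol[OF assms(1,2) N] by auto
  have u: "u \<in> dG" using N dtn_problem.neumann_sol_def[OF assms(1)] by blast
  have "graph_inner J0 J1 G (u - ?w) v = 0" by (rule BD_G_orth[OF v w(2)])
  thus ?thesis using G.graph_inner_diff_left[OF u, of ?w v] w(1) BD_G_subset by auto
qed

lemma DtN_inv_weakly_tendsto:
  assumes v: "v \<in> BD_G J0 J1 dG G dD D"
  shows "(\<lambda>n. graph_inner J0 J1 G (DtN_inv J0 J1 dG G dD D (aa n) (mm n) (qq n)) v)
           \<longlonglongrightarrow> graph_inner J0 J1 G (DtN_inv J0 J1 dG G dD D a m q) v"
proof -
  have vG: "v \<in> dG" "J0 v \<in> dG" using v BD_G_subset G.dm_J by auto
  have Complex: "graph_inner J0 J1 G x v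
      = Complex (inner x v + inner (G x) (G v)) (inner x (J0 v) + inner (G x) (G (J0 v)))" for x
    using G.graph_inner_Re[of x v] G.graph_inner_Im[OF vG(1), of x] G.graph_inner_Re[of x "J0 v"]
    by (simp add: complex_eq_iff)
  show ?thesis
    unfolding graph_inner_DtN_inv_eq[OF dtn_problem_lim q_BD uL_sol v]
      graph_inner_DtN_inv_eq[OF dtn_problem_seq qq_BD[rule_format] un_sol v]
    unfolding Complex
    by (intro tendsto_Complex un_graph_weakly_tendsto vG)
qed

end

theorem proposition4p6:
  fixes J0 :: "'a::{real_inner,complete_space} \<Rightarrow> 'a"
    and J1 :: "'b::{real_inner,complete_space} \<Rightarrow> 'b"
    and dG :: "'a set" and G :: "'a \<Rightarrow> 'b"
    and dD :: "'b set" and D :: "'b \<Rightarrow> 'a"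
    and mm :: "nat \<Rightarrow> 'a \<Rightarrow> 'a" and m :: "'a \<Rightarrow> 'a"
    and aa :: "nat \<Rightarrow> 'b \<Rightarrow> 'b" and a :: "'b \<Rightarrow> 'b"
    and \<mu> :: real
    and qq :: "nat \<Rightarrow> 'b" and q :: 'b
  assumes J0: "complex_structure J0" and J1: "complex_structure J1"
    and G: "densely_defined_closed J0 J1 dG G"
    and D: "densely_defined_closed J1 J0 dD D"
    and GD: "\<forall>y \<in> dom_Dcirc J0 J1 dG G.
               y \<in> dD \<and> D y = - adj (cinner J0) (cinner J1) dG G y"
    and compact_emb: "\<forall>S \<subseteq> dG. bounded ((\<lambda>x. (x, G x)) ` S) \<longrightarrow> compact (closure S)"
    and mm_L: "\<forall>n. bounded_clinear_op J0 (mm n)" and m_L: "bounded_clinear_op J0 m"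
    and aa_L: "\<forall>n. bounded_clinear_op J1 (aa n)" and a_L: "bounded_clinear_op J1 a"
    and mu_pos: "\<mu> > 0"
    and mm_re_ge: "\<forall>n. re_ge J0 (mm n) \<mu>" and m_re_ge: "re_ge J0 m \<mu>"
    and aa_re_ge: "\<forall>n. re_ge J1 (aa n) \<mu>" and a_re_ge: "re_ge J1 a \<mu>"
    and aa_bdd: "bdd_above (range (\<lambda>n. onorm (aa n)))"
    and m_wot: "\<forall>x y. (\<lambda>n. cinner J0 (mm n x) y) \<longlonglongrightarrow> cinner J0 (m x) y"
    and a_wot: "\<forall>x \<in> G ` dG. \<forall>y \<in> G ` dG.
                  (\<lambda>n. cinner J1 (compress_inv J1 (G ` dG) (aa n) x) y)
                    \<longlonglongrightarrow> cinner J1 (compress_inv J1 (G ` dG) a x) y"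
    and qq_BD: "\<forall>n. qq n \<in> BD_D J0 J1 dG G dD D" and q_BD: "q \<in> BD_D J0 J1 dG G dD D"
    and qq_lim: "(\<lambda>n. (qq n, D (qq n))) \<longlonglongrightarrow> (q, D q)"
  shows "\<forall>v \<in> BD_G J0 J1 dG G dD D.
           (\<lambda>n. graph_inner J0 J1 G (DtN_inv J0 J1 dG G dD D (aa n) (mm n) (qq n)) v)
             \<longlonglongrightarrow> graph_inner J0 J1 G (DtN_inv J0 J1 dG G dD D a m q) v"
proof -
  have ops: "closed_operator J0 J1 dG G" "closed_operator J1 J0 dD D"
    using J0 J1 G D by (auto intro!: closed_operator.intro clinear_operator.intro cstruct.intro
        closed_operator_axioms.intro clinear_operator_axioms.intro simp: densely_defined_closed_def)
  interpret dtn_convergence J0 J1 dG G dD D mm m aa a \<mu> qq q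
    by (intro dtn_convergence.intro boundary_setting.intro boundary_setting_axioms.intro
        dtn_convergence_axioms.intro ops GD compact_emb) (fact+)
  show ?thesis using DtN_inv_weakly_tendsto by blast
qed

end
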